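(* Let $D\ge2$, $\alpha_1,\dots,\alpha_{D+1}>0$, $\lambda_1,\dots,\lambda_{D+1}\ge0$ with $\lambda^+=\sum_i\lambda_i>0$. Let the following be mutually independent: $Y_i\sim\chi^2_{2\alpha_i}$ ($i=1,\dots,D+1$); $M_i\sim\mathrm{Poisson}(\lambda_i/2)$ ($i=1,\dots,D+1$); and an i.i.d. family $\{F_{i,j}: i=1,\dots,D+1,\ j\ge1\}$ with $F_{i,j}\sim\chi^2_2$. Set $Y'_i=Y_i+\sum_{j=1}^{M_i}F_{i,j}$ (so $Y'_i\sim\chi'^2_{2\alpha_i}(\lambda_i)$ independently), $Y^+=\sum_iY_i$, $P_i=\sum_{j=1}^{M_i}F_{i,j}$, $P^+=\sum_{i=1}^{D+1}P_i$, $M^+=\sum_iM_i$, $Y'^+=\sum_i Y'_i$, and $\underline X'=(Y'_1/Y'^+,\dots,Y'_D/Y'^+)\sim\mathrm{NcDir}^D(\underline\alpha,\underline\lambda)$. Define $$W=\frac{Y^+}{Y^++P^+},\qquad \underline X=\Big(\frac{Y_1}{Y^+},\dots,\frac{Y_D}{Y^+}\Big),\qquad \underline X'_{pnc}=\Big(\frac{P_1}{P^+},\dots,\frac{P_D}{P^+}\Big),$$ with the convention $\underline X'_{pnc}=\underline 0$ when $M^+=0$. Then $$\underline X'=W\,\underline X+(1-W)\,\underline X'_{pnc},$$ where: (i) $\underline X$ and $(W,\underline X'_{pnc})$ are independent and $\underline X\sim\mathrm{Dir}^D(\alpha_1,\dots,\alpha_{D+1})$; (ii) $W$ and $\underline X'_{pnc}$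 are conditionally independent given $M^+$, with $W\mid M^+\sim\mathrm{Beta}(\alpha^+,M^+)$ (where $\alpha^+=\sum_i\alpha_i$), and, conditionally on $(M_1,\dots,M_{D+1})$, $\underline X'_{pnc}\sim\mathrm{Dir}^D(M_1,\dots,M_{D+1})$, so that the conditional law of $\underline X'_{pnc}$ given $M^+=m$ is the mixture $\sum_{j^+\le m}\frac{m!}{j_1!\cdots j_D!(m-j^+)!}\prod_{i=1}^D(\lambda_i/\lambda^+)^{j_i}(\lambda_{D+1}/\lambda^+)^{m-j^+}\,\mathrm{Dir}^D(j_1,\dots,j_D,m-j^+)$ (the case $\underline\alpha=\underline 0$ of the conditional density in Proposition 1).
   Context: $\mathrm{Dir}^D(a_1,\dots,a_{D+1})$ is the law of $(Z_1/Z^+,\dots,Z_D/Z^+)$ for independent $Z_i\sim\chi^2_{2a_i}$, $Z^+=\sum_{i=1}^{D+1}Z_i$; when some parameters $a_i$ equal $0$ it is understood in this degenerate sense (the corresponding $Z_i=0$, hence the corresponding component is $0$). $\mathrm{Beta}(a,0)$ is the point mass at $1$. $\chi'^2_g(\lambda)$ is the non-central chi-squared law; $\mathrm{NcDir}^D(\underline\alpha,\underline\lambda)$ is the law of $(Y'_1/Y'^+,\dots,Y'_D/Y'^+)$ for independent $Y'_i\sim\chi'^2_{2\alpha_i}(\lambda_i)$. The sum over $j^+\le m$ runs over $(j_1,\dots,j_D)\in\mathbb N_0^D$ with $j_1+\dots+j_D\le m$. *)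

theory Defs
  imports "HOL-Probability.Probability"
begin

text \<open>Chi-squared law with 2a degrees of freedom (a \<ge> 0); for a = 0 it is the point mass at 0.\<close>
definition chi2_density :: "real \<Rightarrow> real \<Rightarrow> real" where
  "chi2_density a x = (if 0 < x then x powr (a - 1) * exp (- x / 2) / (2 powr a * Gamma a) else 0)"

definition chi2_measure :: "real \<Rightarrow> real measure" where
  "chi2_measure a = (if a = 0 then return borel 0 else density lborel (\<lambda>x. ennreal (chi2_density a x)))"

definition dirichlet_measure :: "nat \<Rightarrow> (nat \<Rightarrow> real) \<Rightarrow> (nat \<Rightarrow> real) measure" where
  "dirichlet_measure D a =
     distr (PiM {..D} (\<lambda>i. chi2_measure (a i))) (PiM {..<D} (\<lambda>_. borel))
       (\<lambda>z. \<lambda>i\<in>{..<D}. z i / (\<Sum>k\<le>D. z k))"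

definition beta_measure :: "real \<Rightarrow> real \<Rightarrow> real measure" where
  "beta_measure a b = (if b = 0 then return borel 1 else
     density lborel (\<lambda>x. ennreal (if 0 < x \<and> x < 1
        then x powr (a - 1) * (1 - x) powr (b - 1) / Beta a b else 0)))"

text \<open>Index type for the mutually independent family (Y_i), (M_i), (F_{i,j}).\<close>
datatype src = SY nat | SM nat | SF nat nat

end

theory Submission
  imports Defs
begin

text \<open>Two facts about independent chi-squared variables carry the proof. If \<open>U \<sim> \<chi>\<^sup>2(2a)\<close> and
  \<open>V \<sim> \<chi>\<^sup>2(2b)\<close> are independent, then \<open>U + V \<sim> \<chi>\<^sup>2(2a + 2b)\<close> is independent of
  \<open>U / (U + V) \<sim> Beta(a, b)\<close>, by the change of variables \<open>(U, V) = (S R, S (1 - R))\<close>. Iterating this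
  (stick breaking), the sum of independent chi-squared variables is independent of their normalised
  vector, which is Dirichlet by definition.

  On the event \<open>M = n\<close> the Poisson sums \<open>P\<^sub>i\<close> become sums of \<open>n\<^sub>i\<close> of the \<open>F\<^sub>i\<^sub>j\<close>, i.e. independent
  \<open>\<chi>\<^sup>2(2n\<^sub>i)\<close> variables independent of the \<open>Y\<^sub>i\<close> and of the counts. Hence there
  \<open>W \<sim> Beta(\<alpha>\<^sup>+, n\<^sup>+)\<close> and \<open>X'\<^sub>p\<^sub>n\<^sub>c \<sim> Dir(n)\<close> are independent. Moreover \<open>X\<close> is independent of \<open>Y\<^sup>+\<close>
  and of all other sources, and \<open>(W, X'\<^sub>p\<^sub>n\<^sub>c)\<close> is a function of these. Summing over the \<open>n\<close> with
  \<open>n\<^sup>+ = m\<close>, where independent Poisson counts given their total are multinomial, yields the laws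
  given \<open>M\<^sup>+\<close>. The decomposition of \<open>X'\<close> is pointwise algebra.\<close>

section \<open>Chi-squared and beta laws\<close>

lemma chi2_density_borel [measurable]: "chi2_density a \<in> borel_measurable borel"
  unfolding chi2_density_def[abs_def] by measurable

lemma chi2_density_nonneg: "0 < a \<Longrightarrow> 0 \<le> chi2_density a x"
  unfolding chi2_density_def using Gamma_real_pos[of a] by auto

lemma chi2_density_nonpos_eq_0: "x \<le> 0 \<Longrightarrow> chi2_density a x = 0"
  unfolding chi2_density_def by auto

lemma sets_chi2_measure [simp]: "sets (chi2_measure a) = sets borel"
  by (simp add: chi2_measure_def)

lemma sigma_finite_chi2_measure: "sigma_finite_measure (chi2_measure a)"
proof (cases "a = 0")
  case True
  then show ?thesis
    by (simp add: chi2_measure_def prob_space_imp_sigma_finite prob_space_return)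
next
  case False
  have "sigma_finite_measure (density lborel (\<lambda>x. ennreal (chi2_density a x)))"
    by (subst sigma_finite_measure.sigma_finite_iff_density_finite'[OF sigma_finite_lborel]) auto
  then show ?thesis
    using False by (simp add: chi2_measure_def)
qed

lemma emeasure_chi2_measure:
  assumes "0 < a" "A \<in> sets borel"
  shows "emeasure (chi2_measure a) A = (\<integral>\<^sup>+x. ennreal (chi2_density a x * indicator A x) \<partial>lborel)"
  using assms by (auto simp: chi2_measure_def emeasure_density indicator_def intro!: nn_integral_cong)

lemma AE_chi2_measure_pos:
  assumes "0 < a"
  shows "AE x in chi2_measure a. 0 < x"
proof -
  have e: "chi2_measure a = density lborel (\<lambda>x. ennreal (chi2_density a x))"
    using assms by (simp add: chi2_measure_def)
  have "AE x in lborel. 0 < ennreal (chi2_density a x) \<longrightarrow> 0 < x"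
    by (rule AE_I2) (auto simp: chi2_density_def)
  then show ?thesis
    unfolding e by (subst AE_density) auto
qed

lemma AE_chi2_measure_0: "AE x in chi2_measure 0. x = 0"
  unfolding chi2_measure_def by (simp, subst AE_return) auto

lemma AE_chi2_measure_nonneg: "0 \<le> a \<Longrightarrow> AE x in chi2_measure a. 0 \<le> x"
  using AE_chi2_measure_0 AE_chi2_measure_pos[of a] by (cases "a = 0") (auto elim: eventually_mono)

definition beta_density :: "real \<Rightarrow> real \<Rightarrow> real \<Rightarrow> real" where
  "beta_density a b x = (if 0 < x \<and> x < 1 then x powr (a - 1) * (1 - x) powr (b - 1) / Beta a b else 0)"

lemma beta_density_borel [measurable]: "beta_density a b \<in> borel_measurable borel"
  unfolding beta_density_def[abs_def] by measurable

lemma sets_beta_measure [simp]: "sets (beta_measure a b) = sets borel"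
  by (simp add: beta_measure_def)

lemma beta_measure_eq_density:
  "b \<noteq> 0 \<Longrightarrow> beta_measure a b = density lborel (\<lambda>x. ennreal (beta_density a b x))"
  by (simp add: beta_measure_def beta_density_def[abs_def])

lemma emeasure_beta_measure:
  assumes "b \<noteq> 0" "B \<in> sets borel"
  shows "emeasure (beta_measure a b) B = (\<integral>\<^sup>+x. ennreal (beta_density a b x * indicator B x) \<partial>lborel)"
  using assms by (auto simp: beta_measure_eq_density emeasure_density indicator_def intro!: nn_integral_cong)

lemma emeasure_beta_measure_UNIV:
  assumes "0 < a" "0 < b"
  shows "emeasure (beta_measure a b) UNIV = 1"
proof -
  have B: "Beta a b > 0"
    using assms by (simp add: Beta_def Gamma_real_pos)
  have "((\<lambda>x. x powr (a - 1) * (1 - x) powr (b - 1) / Beta a b) has_integral 1) {0..1}"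
    using has_integral_divide[OF has_integral_Beta_real[OF assms], of "Beta a b"] B by simp
  from nn_integral_has_integral_lebesgue[OF _ this]
  have "(\<integral>\<^sup>+x. ennreal (indicator {0..1} x * (x powr (a - 1) * (1 - x) powr (b - 1) / Beta a b)) \<partial>lborel) = 1"
    using B by simp
  moreover have "emeasure (beta_measure a b) UNIV
      = (\<integral>\<^sup>+x. ennreal (indicator {0..1} x * (x powr (a - 1) * (1 - x) powr (b - 1) / Beta a b)) \<partial>lborel)"
    using assms by (auto simp: beta_measure_eq_density emeasure_density beta_density_def indicator_def
        intro!: nn_integral_cong)
  ultimately show ?thesis by simp
qed

text \<open>The Jacobian of the change of variables \<open>(u, v) = (s x, s - s x)\<close> is \<open>s\<close>.\<close>

lemma chi2_density_split_beta:
  fixes a b s x :: real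
  assumes a: "0 < a" and b: "0 < b" and s: "0 < s"
  shows "s * chi2_density a (s * x) * chi2_density b (s - s * x) = chi2_density (a + b) s * beta_density a b x"
proof (cases "0 < x \<and> x < 1")
  case True
  then have x: "0 < x" "x < 1" by auto
  have pos: "0 < s * x" "0 < s - s * x"
    using s x by (simp_all add: algebra_simps)
  have G: "Gamma a > 0" "Gamma b > 0" "Gamma (a + b) > 0"
    using a b by (auto intro: Gamma_real_pos)
  have e: "exp (- (s * x) / 2) * exp (- (s - s * x) / 2) = exp (- s / 2)"
    by (simp add: exp_add[symmetric] field_simps)
  have p1: "(s * x) powr (a - 1) = s powr (a - 1) * x powr (a - 1)"
    using s x by (simp add: powr_mult)
  have p2: "(s - s * x) powr (b - 1) = s powr (b - 1) * (1 - x) powr (b - 1)"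
    using s x by (subst powr_mult[symmetric]) (auto simp: algebra_simps)
  have p3: "s * s powr (a - 1) * s powr (b - 1) = s powr (a + b - 1)"
    using s by (simp add: powr_add[symmetric] powr_diff)
  have p4: "2 powr (a + b) = 2 powr a * (2::real) powr b"
    by (simp add: powr_add)
  have "s * chi2_density a (s * x) * chi2_density b (s - s * x)
      = (s * s powr (a - 1) * s powr (b - 1)) * (exp (- (s * x) / 2) * exp (- (s - s * x) / 2))
        * (x powr (a - 1) * (1 - x) powr (b - 1)) / ((2 powr a * 2 powr b) * (Gamma a * Gamma b))"
    using pos by (simp add: chi2_density_def p1 p2 mult_ac)
  also have "\<dots> = s powr (a + b - 1) * exp (- s / 2) * (x powr (a - 1) * (1 - x) powr (b - 1))
      / (2 powr (a + b) * (Gamma a * Gamma b))"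
    by (simp only: p3 e p4)
  also have "\<dots> = chi2_density (a + b) s * beta_density a b x"
    using s x G by (simp add: chi2_density_def beta_density_def Beta_def)
  finally show ?thesis .
next
  case False
  then have "s * x \<le> 0 \<or> s - s * x \<le> 0"
    using s by (auto simp: mult_le_0_iff mult_le_cancel_left1 not_less)
  then show ?thesis
    using False by (auto simp: chi2_density_nonpos_eq_0 beta_density_def)
qed

lemma nn_integral_chi2_density_fibre:
  assumes a: "0 < a" and b: "0 < b" and B[measurable]: "B \<in> sets borel"
  shows "(\<integral>\<^sup>+u. ennreal (chi2_density a u * chi2_density b (s - u) * indicator B (u / s)) \<partial>lborel)
    = ennreal (chi2_density (a + b) s) * emeasure (beta_measure a b) B"
proof (cases "0 < s")
  case True
  have "(\<integral>\<^sup>+u. ennreal (chi2_density a u * chi2_density b (s - u) * indicator B (u / s)) \<partial>lborel)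
      = ennreal s * (\<integral>\<^sup>+x. ennreal (chi2_density a (s * x) * chi2_density b (s - s * x) * indicator B x) \<partial>lborel)"
    using nn_integral_real_affine[of "\<lambda>u. ennreal (chi2_density a u * chi2_density b (s - u) * indicator B (u / s))" s 0]
      True by simp
  also have "\<dots> = (\<integral>\<^sup>+x. ennreal (s * chi2_density a (s * x) * chi2_density b (s - s * x) * indicator B x) \<partial>lborel)"
    using True by (subst nn_integral_cmult[symmetric]) (auto simp: ennreal_mult'[symmetric] mult.assoc)
  also have "\<dots> = (\<integral>\<^sup>+x. ennreal (chi2_density (a + b) s) * ennreal (beta_density a b x * indicator B x) \<partial>lborel)"
    using chi2_density_split_beta[OF a b True] chi2_density_nonneg[of "a + b" s] a b
    by (intro nn_integral_cong) (simp add: ennreal_mult'[symmetric] mult.assoc)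
  also have "\<dots> = ennreal (chi2_density (a + b) s) * emeasure (beta_measure a b) B"
    using b by (simp add: nn_integral_cmult emeasure_beta_measure)
  finally show ?thesis .
next
  case False
  then have z: "chi2_density a u * chi2_density b (s - u) * indicator B (u / s) = 0" for u
    by (cases "u \<le> 0") (simp_all add: chi2_density_nonpos_eq_0)
  have "(\<integral>\<^sup>+u. ennreal (chi2_density a u * chi2_density b (s - u) * indicator B (u / s)) \<partial>lborel)
      = (\<integral>\<^sup>+(u::real). 0 \<partial>lborel)"
    by (intro nn_integral_cong) (simp only: z ennreal_0)
  then show ?thesis
    using False by (simp add: chi2_density_nonpos_eq_0)
qed

lemma emeasure_chi2_pair_sum_ratio:
  assumes a: "0 < a" and b: "0 < b"
    and A[measurable]: "A \<in> sets borel" and B[measurable]: "B \<in> sets borel"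
  shows "emeasure (chi2_measure a \<Otimes>\<^sub>M chi2_measure b)
      {p \<in> space (borel \<Otimes>\<^sub>M borel). fst p + snd p \<in> A \<and> fst p / (fst p + snd p) \<in> B}
    = emeasure (chi2_measure (a + b)) A * emeasure (beta_measure a b) B"
proof -
  let ?f = chi2_density
  define E where "E = {p \<in> space (borel \<Otimes>\<^sub>M borel). fst p + snd p \<in> A \<and> fst p / (fst p + snd p) \<in> B}"
  define G where "G u v = ?f a u * ?f b v * indicator A (u + v) * indicator B (u / (u + v))" for u v
  have [measurable]: "E \<in> sets (borel \<Otimes>\<^sub>M borel)"
    unfolding E_def by measurable
  have [measurable]: "(\<lambda>(u, v). G u v) \<in> borel_measurable (borel \<Otimes>\<^sub>M borel)"
    unfolding G_def by measurable
  have "emeasure (chi2_measure a \<Otimes>\<^sub>M chi2_measure b) E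
      = (\<integral>\<^sup>+u. \<integral>\<^sup>+v. indicator E (u, v) \<partial>chi2_measure b \<partial>chi2_measure a)"
    by (rule sigma_finite_measure.emeasure_pair_measure[OF sigma_finite_chi2_measure])
      (simp cong: sets_pair_measure_cong)
  also have "\<dots> = (\<integral>\<^sup>+u. ennreal (?f a u) * (\<integral>\<^sup>+v. ennreal (?f b v) * indicator E (u, v) \<partial>lborel) \<partial>lborel)"
    using a b by (simp add: chi2_measure_def nn_integral_density)
  also have "\<dots> = (\<integral>\<^sup>+u. \<integral>\<^sup>+v. ennreal (G u v) \<partial>lborel \<partial>lborel)"
    using a b
    by (intro nn_integral_cong, subst nn_integral_cmult[symmetric], measurable, intro nn_integral_cong)
      (auto simp: G_def E_def indicator_def ennreal_mult'[symmetric] chi2_density_nonneg space_pair_measure)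
  also have "\<dots> = (\<integral>\<^sup>+u. \<integral>\<^sup>+s. ennreal (G u (s - u)) \<partial>lborel \<partial>lborel)"
    using nn_integral_real_affine[of "\<lambda>v. ennreal (G _ v)" 1 "- _"] by simp
  also have "\<dots> = (\<integral>\<^sup>+s. \<integral>\<^sup>+u. ennreal (G u (s - u)) \<partial>lborel \<partial>lborel)"
    by (rule lborel_pair.Fubini'[symmetric]) (simp add: case_prod_unfold cong: measurable_cong_sets)
  also have "\<dots> = (\<integral>\<^sup>+s. ennreal (?f (a + b) s * indicator A s) * emeasure (beta_measure a b) B \<partial>lborel)"
  proof (intro nn_integral_cong)
    fix s :: real
    have "G u (s - u) = indicator A s * (?f a u * ?f b (s - u) * indicator B (u / s))" for u
      by (simp add: G_def)
    then show "(\<integral>\<^sup>+u. ennreal (G u (s - u)) \<partial>lborel)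
        = ennreal (?f (a + b) s * indicator A s) * emeasure (beta_measure a b) B"
      using nn_integral_chi2_density_fibre[OF a b B, of s] a b
      by (simp add: ennreal_mult' nn_integral_cmult chi2_density_nonneg mult_ac
          split: split_indicator)
  qed
  also have "\<dots> = emeasure (chi2_measure (a + b)) A * emeasure (beta_measure a b) B"
    using a b by (simp add: nn_integral_multc emeasure_chi2_measure)
  finally show ?thesis
    unfolding E_def .
qed

section \<open>Independence of two random variables\<close>

text \<open>The library's \<open>indep_var\<close> requires both random variables to have the same codomain type;
  the vectors, reals and pairs below need independence across different types.\<close>

definition (in prob_space) indep_rv :: "'b measure \<Rightarrow> ('a \<Rightarrow> 'b) \<Rightarrow> 'c measure \<Rightarrow> ('a \<Rightarrow> 'c) \<Rightarrow> bool" where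
  "indep_rv S X T Y \<longleftrightarrow> random_variable S X \<and> random_variable T Y \<and>
     (\<forall>A\<in>sets S. \<forall>B\<in>sets T. prob {\<omega>\<in>space M. X \<omega> \<in> A \<and> Y \<omega> \<in> B}
        = prob {\<omega>\<in>space M. X \<omega> \<in> A} * prob {\<omega>\<in>space M. Y \<omega> \<in> B})"

lemma (in prob_space) indep_rvD:
  assumes "indep_rv S X T Y" "A \<in> sets S" "B \<in> sets T"
  shows "prob {\<omega>\<in>space M. X \<omega> \<in> A \<and> Y \<omega> \<in> B} = prob {\<omega>\<in>space M. X \<omega> \<in> A} * prob {\<omega>\<in>space M. Y \<omega> \<in> B}"
  using assms unfolding indep_rv_def by auto

lemma (in prob_space)
  assumes "indep_rv S X T Y"
  shows indep_rv_rv1: "random_variable S X" and indep_rv_rv2: "random_variable T Y"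
  using assms unfolding indep_rv_def by auto

lemma (in prob_space) indep_rvI:
  assumes "random_variable S X" "random_variable T Y"
    and "\<And>A B. A \<in> sets S \<Longrightarrow> B \<in> sets T \<Longrightarrow>
      prob {\<omega>\<in>space M. X \<omega> \<in> A \<and> Y \<omega> \<in> B} = prob {\<omega>\<in>space M. X \<omega> \<in> A} * prob {\<omega>\<in>space M. Y \<omega> \<in> B}"
  shows "indep_rv S X T Y"
  using assms unfolding indep_rv_def by auto

lemma (in prob_space) indep_var_imp_indep_rv:
  assumes "indep_var S X T Y"
  shows "indep_rv S X T Y"
proof (rule indep_rvI[OF indep_var_rv1[OF assms] indep_var_rv2[OF assms]])
  fix A B assume "A \<in> sets S" "B \<in> sets T"
  moreover have "{\<omega>\<in>space M. X \<omega> \<in> A \<and> Y \<omega> \<in> B} = (\<lambda>\<omega>. (X \<omega>, Y \<omega>)) -` (A \<times> B) \<inter> space M"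
    "{\<omega>\<in>space M. X \<omega> \<in> A} = X -` A \<inter> space M" "{\<omega>\<in>space M. Y \<omega> \<in> B} = Y -` B \<inter> space M"
    by auto
  ultimately show "prob {\<omega>\<in>space M. X \<omega> \<in> A \<and> Y \<omega> \<in> B} = prob {\<omega>\<in>space M. X \<omega> \<in> A} * prob {\<omega>\<in>space M. Y \<omega> \<in> B}"
    using indep_varD[OF assms] by simp
qed

lemma Int_stable_vimage:
  assumes "Int_stable G"
  shows "Int_stable {f -` A \<inter> \<Omega> | A. A \<in> G}"
proof (rule Int_stableI)
  fix a b assume "a \<in> {f -` A \<inter> \<Omega> | A. A \<in> G}" "b \<in> {f -` A \<inter> \<Omega> | A. A \<in> G}"
  then obtain A B where "a = f -` A \<inter> \<Omega>" "b = f -` B \<inter> \<Omega>" "A \<in> G" "B \<in> G"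
    by auto
  then have "a \<inter> b = f -` (A \<inter> B) \<inter> \<Omega>" "A \<inter> B \<in> G"
    using Int_stableD[OF assms] by auto
  then show "a \<inter> b \<in> {f -` A \<inter> \<Omega> | A. A \<in> G}"
    by blast
qed

lemma (in prob_space) indep_rvI_generator:
  assumes X: "random_variable S X" and Y: "random_variable T Y"
    and S: "sets S = sigma_sets (space S) Gs" "Int_stable Gs"
    and T: "sets T = sigma_sets (space T) Gt" "Int_stable Gt"
    and prod: "\<And>A B. A \<in> Gs \<Longrightarrow> B \<in> Gt \<Longrightarrow>
      prob {\<omega>\<in>space M. X \<omega> \<in> A \<and> Y \<omega> \<in> B} = prob {\<omega>\<in>space M. X \<omega> \<in> A} * prob {\<omega>\<in>space M. Y \<omega> \<in> B}"
  shows "indep_rv S X T Y"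
proof -
  let ?GX = "{X -` A \<inter> space M | A. A \<in> Gs}" and ?GY = "{Y -` B \<inter> space M | B. B \<in> Gt}"
  have vimage: "X -` A \<inter> space M = {\<omega>\<in>space M. X \<omega> \<in> A}" "Y -` B \<inter> space M = {\<omega>\<in>space M. Y \<omega> \<in> B}"
    "{\<omega>\<in>space M. X \<omega> \<in> A} \<inter> {\<omega>\<in>space M. Y \<omega> \<in> B} = {\<omega>\<in>space M. X \<omega> \<in> A \<and> Y \<omega> \<in> B}" for A B
    by auto
  have "Gs \<subseteq> sets S" "Gt \<subseteq> sets T"
    using S(1) T(1) by (auto intro: sigma_sets.Basic)
  then have "indep_set (sigma_sets (space M) ?GX) (sigma_sets (space M) ?GY)"
    using X Y prod
    by (intro indep_set_sigma_sets indep_setI Int_stable_vimage S(2) T(2))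
      (auto simp: measurable_def vimage)
  moreover have "{X -` A \<inter> space M | A. A \<in> sets S} = sigma_sets (space M) ?GX"
    unfolding S(1) using X by (intro sigma_sets_vimage_commute) (auto simp: measurable_def)
  moreover have "{Y -` B \<inter> space M | B. B \<in> sets T} = sigma_sets (space M) ?GY"
    unfolding T(1) using Y by (intro sigma_sets_vimage_commute) (auto simp: measurable_def)
  ultimately have indep: "indep_set {X -` A \<inter> space M | A. A \<in> sets S} {Y -` B \<inter> space M | B. B \<in> sets T}"
    by simp
  show ?thesis
  proof (rule indep_rvI[OF X Y])
    fix A B assume "A \<in> sets S" "B \<in> sets T"
    then show "prob {\<omega>\<in>space M. X \<omega> \<in> A \<and> Y \<omega> \<in> B} = prob {\<omega>\<in>space M. X \<omega> \<in> A} * prob {\<omega>\<in>space M. Y \<omega> \<in> B}"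
      using indep_setD[OF indep, of "X -` A \<inter> space M" "Y -` B \<inter> space M"] by (auto simp: vimage)
  qed
qed

lemma (in prob_space) indep_rv_sym:
  assumes "indep_rv S X T Y"
  shows "indep_rv T Y S X"
  using assms indep_rv_rv1[OF assms] indep_rv_rv2[OF assms]
  by (intro indep_rvI) (auto simp: indep_rvD conj_commute mult.commute)

lemma (in prob_space) indep_rv_compose_eq:
  assumes indep: "indep_rv S X T Y" and f[measurable]: "f \<in> measurable S S'" and g[measurable]: "g \<in> measurable T T'"
    and X': "\<And>\<omega>. \<omega> \<in> space M \<Longrightarrow> X' \<omega> = f (X \<omega>)" and Y': "\<And>\<omega>. \<omega> \<in> space M \<Longrightarrow> Y' \<omega> = g (Y \<omega>)"
  shows "indep_rv S' X' T' Y'"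
proof -
  have X[measurable]: "random_variable S X" and Y[measurable]: "random_variable T Y"
    using indep_rv_rv1[OF indep] indep_rv_rv2[OF indep] .
  have "random_variable S' X'" "random_variable T' Y'"
    by (simp_all add: measurable_cong[OF X'] measurable_cong[OF Y'])
  then show ?thesis
  proof (rule indep_rvI)
    fix A B assume "A \<in> sets S'" "B \<in> sets T'"
    then have sets: "f -` A \<inter> space S \<in> sets S" "g -` B \<inter> space T \<in> sets T"
      by measurable
    have "{\<omega>\<in>space M. X' \<omega> \<in> A \<and> Y' \<omega> \<in> B} = {\<omega>\<in>space M. X \<omega> \<in> f -` A \<inter> space S \<and> Y \<omega> \<in> g -` B \<inter> space T}"
      "{\<omega>\<in>space M. X' \<omega> \<in> A} = {\<omega>\<in>space M. X \<omega> \<in> f -` A \<inter> space S}"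
      "{\<omega>\<in>space M. Y' \<omega> \<in> B} = {\<omega>\<in>space M. Y \<omega> \<in> g -` B \<inter> space T}"
      using measurable_space[OF X] measurable_space[OF Y] X' Y' by auto
    then show "prob {\<omega>\<in>space M. X' \<omega> \<in> A \<and> Y' \<omega> \<in> B} = prob {\<omega>\<in>space M. X' \<omega> \<in> A} * prob {\<omega>\<in>space M. Y' \<omega> \<in> B}"
      using indep_rvD[OF indep sets] by (simp only:)
  qed
qed

lemma (in prob_space) indep_rv_pair_right:
  assumes X: "random_variable S X" and Y: "random_variable T Y" and Z: "random_variable U Z"
    and prod: "\<And>A B C. A \<in> sets S \<Longrightarrow> B \<in> sets T \<Longrightarrow> C \<in> sets U \<Longrightarrow>
      prob {\<omega>\<in>space M. X \<omega> \<in> A \<and> Y \<omega> \<in> B \<and> Z \<omega> \<in> C}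
      = prob {\<omega>\<in>space M. X \<omega> \<in> A} * prob {\<omega>\<in>space M. Y \<omega> \<in> B \<and> Z \<omega> \<in> C}"
  shows "indep_rv S X (T \<Otimes>\<^sub>M U) (\<lambda>\<omega>. (Y \<omega>, Z \<omega>))"
proof (rule indep_rvI_generator[OF X])
  show "random_variable (T \<Otimes>\<^sub>M U) (\<lambda>\<omega>. (Y \<omega>, Z \<omega>))"
    using Y Z by measurable
  show "sets S = sigma_sets (space S) (sets S)" "Int_stable (sets S)"
    by (auto simp: sets.sigma_sets_eq Int_stable_def)
  show "sets (T \<Otimes>\<^sub>M U) = sigma_sets (space (T \<Otimes>\<^sub>M U)) {a \<times> b | a b. a \<in> sets T \<and> b \<in> sets U}"
    by (simp add: sets_pair_measure space_pair_measure)
  show "Int_stable {a \<times> b | a b. a \<in> sets T \<and> b \<in> sets U}"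
    by (rule Int_stable_pair_measure_generator)
next
  fix A D assume "A \<in> sets S" "D \<in> {a \<times> b | a b. a \<in> sets T \<and> b \<in> sets U}"
  then show "prob {\<omega>\<in>space M. X \<omega> \<in> A \<and> (Y \<omega>, Z \<omega>) \<in> D}
      = prob {\<omega>\<in>space M. X \<omega> \<in> A} * prob {\<omega>\<in>space M. (Y \<omega>, Z \<omega>) \<in> D}"
    using prod by auto
qed

lemma (in prob_space) indep_rv_pair_assoc_right:
  assumes XY: "indep_rv S X T Y" and XY_Z: "indep_rv (S \<Otimes>\<^sub>M T) (\<lambda>\<omega>. (X \<omega>, Y \<omega>)) U Z"
  shows "indep_rv S X (T \<Otimes>\<^sub>M U) (\<lambda>\<omega>. (Y \<omega>, Z \<omega>))"
proof -
  have X[measurable]: "random_variable S X" and Y[measurable]: "random_variable T Y"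
    and Z[measurable]: "random_variable U Z"
    using indep_rv_rv1[OF XY] indep_rv_rv2[OF XY] indep_rv_rv2[OF XY_Z] by auto
  have joint: "prob {\<omega>\<in>space M. X \<omega> \<in> A \<and> Y \<omega> \<in> B \<and> Z \<omega> \<in> C}
      = prob {\<omega>\<in>space M. X \<omega> \<in> A \<and> Y \<omega> \<in> B} * prob {\<omega>\<in>space M. Z \<omega> \<in> C}"
    if "A \<in> sets S" "B \<in> sets T" "C \<in> sets U" for A B C
    using indep_rvD[OF XY_Z, of "A \<times> B" C] that by (simp add: conj_assoc)
  show ?thesis
  proof (rule indep_rv_pair_right[OF X Y Z])
    fix A B C assume sets: "A \<in> sets S" "B \<in> sets T" "C \<in> sets U"
    have "{\<omega>\<in>space M. X \<omega> \<in> space S \<and> Y \<omega> \<in> B} = {\<omega>\<in>space M. Y \<omega> \<in> B}"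
      "{\<omega>\<in>space M. X \<omega> \<in> space S \<and> Y \<omega> \<in> B \<and> Z \<omega> \<in> C} = {\<omega>\<in>space M. Y \<omega> \<in> B \<and> Z \<omega> \<in> C}"
      using measurable_space[OF X] by auto
    then have "prob {\<omega>\<in>space M. Y \<omega> \<in> B \<and> Z \<omega> \<in> C} = prob {\<omega>\<in>space M. Y \<omega> \<in> B} * prob {\<omega>\<in>space M. Z \<omega> \<in> C}"
      using joint[of "space S" B C] sets by simp
    then show "prob {\<omega>\<in>space M. X \<omega> \<in> A \<and> Y \<omega> \<in> B \<and> Z \<omega> \<in> C}
        = prob {\<omega>\<in>space M. X \<omega> \<in> A} * prob {\<omega>\<in>space M. Y \<omega> \<in> B \<and> Z \<omega> \<in> C}"
      using joint[OF sets] indep_rvD[OF XY sets(1,2)] by simp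
  qed
qed

lemma (in prob_space) indep_rv_pair_assoc_left:
  assumes X_YZ: "indep_rv S X (T \<Otimes>\<^sub>M U) (\<lambda>\<omega>. (Y \<omega>, Z \<omega>))" and YZ: "indep_rv T Y U Z"
  shows "indep_rv (S \<Otimes>\<^sub>M T) (\<lambda>\<omega>. (X \<omega>, Y \<omega>)) U Z"
proof -
  have "indep_rv U Z (T \<Otimes>\<^sub>M S) (\<lambda>\<omega>. (Y \<omega>, X \<omega>))"
  proof (rule indep_rv_pair_assoc_right[OF indep_rv_sym[OF YZ]])
    show "indep_rv (U \<Otimes>\<^sub>M T) (\<lambda>\<omega>. (Z \<omega>, Y \<omega>)) S X"
      by (rule indep_rv_compose_eq[OF indep_rv_sym[OF X_YZ] measurable_pair_swap' measurable_id]) simp_all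
  qed
  from indep_rv_sym[OF this] show ?thesis
    by (rule indep_rv_compose_eq[OF _ measurable_pair_swap' measurable_id]) simp_all
qed

lemma (in prob_space) indep_rv_AE_cong:
  assumes indep: "indep_rv S X T Y"
    and X'[measurable]: "random_variable S X'" and Y'[measurable]: "random_variable T Y'"
    and "AE \<omega> in M. X \<omega> = X' \<omega>" "AE \<omega> in M. Y \<omega> = Y' \<omega>"
  shows "indep_rv S X' T Y'"
proof (rule indep_rvI[OF X' Y'])
  have [measurable]: "random_variable S X" "random_variable T Y"
    using indep_rv_rv1[OF indep] indep_rv_rv2[OF indep] by auto
  fix A B assume [measurable]: "A \<in> sets S" "B \<in> sets T"
  have "prob {\<omega>\<in>space M. X' \<omega> \<in> A \<and> Y' \<omega> \<in> B} = prob {\<omega>\<in>space M. X \<omega> \<in> A \<and> Y \<omega> \<in> B}"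
    "prob {\<omega>\<in>space M. X' \<omega> \<in> A} = prob {\<omega>\<in>space M. X \<omega> \<in> A}"
    "prob {\<omega>\<in>space M. Y' \<omega> \<in> B} = prob {\<omega>\<in>space M. Y \<omega> \<in> B}"
    using assms(4,5) by (auto intro!: finite_measure_eq_AE elim: AE_mp)
  then show "prob {\<omega>\<in>space M. X' \<omega> \<in> A \<and> Y' \<omega> \<in> B} = prob {\<omega>\<in>space M. X' \<omega> \<in> A} * prob {\<omega>\<in>space M. Y' \<omega> \<in> B}"
    using indep_rvD[OF indep] by simp
qed

lemma (in prob_space) indep_rv_AE_const:
  assumes X[measurable]: "random_variable S X" and Y[measurable]: "random_variable T Y"
    and const: "AE \<omega> in M. Y \<omega> = c"
  shows "indep_rv S X T Y"
proof (rule indep_rvI[OF X Y])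
  fix A B assume [measurable]: "A \<in> sets S" "B \<in> sets T"
  show "prob {\<omega>\<in>space M. X \<omega> \<in> A \<and> Y \<omega> \<in> B} = prob {\<omega>\<in>space M. X \<omega> \<in> A} * prob {\<omega>\<in>space M. Y \<omega> \<in> B}"
  proof (cases "c \<in> B")
    case True
    then have "prob {\<omega>\<in>space M. X \<omega> \<in> A \<and> Y \<omega> \<in> B} = prob {\<omega>\<in>space M. X \<omega> \<in> A}"
      "prob {\<omega>\<in>space M. Y \<omega> \<in> B} = prob (space M)"
      using const by (auto intro!: finite_measure_eq_AE elim!: eventually_mono)
    then show ?thesis
      by (simp add: prob_space)
  next
    case False
    have "prob {\<omega>\<in>space M. X \<omega> \<in> A \<and> Y \<omega> \<in> B} = prob {}" "prob {\<omega>\<in>space M. Y \<omega> \<in> B} = prob {}"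
      by (rule finite_measure_eq_AE; use const False in \<open>auto elim!: eventually_mono\<close>)+
    then show ?thesis
      by simp
  qed
qed

lemma (in prob_space) indep_rv_distr_pair:
  assumes indep: "indep_rv S X T Y"
  shows "distr M (S \<Otimes>\<^sub>M T) (\<lambda>\<omega>. (X \<omega>, Y \<omega>)) = distr M S X \<Otimes>\<^sub>M distr M T Y"
proof -
  have X[measurable]: "random_variable S X" and Y[measurable]: "random_variable T Y"
    using indep_rv_rv1[OF indep] indep_rv_rv2[OF indep] .
  interpret X: prob_space "distr M S X" by (rule prob_space_distr) fact
  interpret Y: prob_space "distr M T Y" by (rule prob_space_distr) fact
  interpret XY: pair_prob_space "distr M S X" "distr M T Y" ..
  show ?thesis
  proof (rule pair_measure_eqI[symmetric])
    show "sigma_finite_measure (distr M S X)" "sigma_finite_measure (distr M T Y)" ..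
    show "sets (distr M S X \<Otimes>\<^sub>M distr M T Y) = sets (distr M (S \<Otimes>\<^sub>M T) (\<lambda>\<omega>. (X \<omega>, Y \<omega>)))"
      by (simp cong: sets_pair_measure_cong)
    fix A B assume "A \<in> sets (distr M S X)" "B \<in> sets (distr M T Y)"
    then have [measurable]: "A \<in> sets S" "B \<in> sets T"
      by auto
    have "emeasure (distr M (S \<Otimes>\<^sub>M T) (\<lambda>\<omega>. (X \<omega>, Y \<omega>))) (A \<times> B) = prob {\<omega>\<in>space M. X \<omega> \<in> A \<and> Y \<omega> \<in> B}"
      by (simp add: emeasure_distr emeasure_eq_measure vimage_def Int_def conj_commute)
    also have "\<dots> = prob {\<omega>\<in>space M. X \<omega> \<in> A} * prob {\<omega>\<in>space M. Y \<omega> \<in> B}"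
      by (simp add: indep_rvD[OF indep])
    also have "\<dots> = emeasure (distr M S X) A * emeasure (distr M T Y) B"
      by (simp add: emeasure_distr emeasure_eq_measure ennreal_mult vimage_def Int_def conj_commute)
    finally show "emeasure (distr M S X) A * emeasure (distr M T Y) B
        = emeasure (distr M (S \<Otimes>\<^sub>M T) (\<lambda>\<omega>. (X \<omega>, Y \<omega>))) (A \<times> B)"
      by simp
  qed
qed

section \<open>Sums and ratios of independent chi-squared variables\<close>

lemma (in prob_space) emeasure_chi2_sum_ratio:
  assumes indep: "indep_rv borel U borel V"
    and U: "distr M borel U = chi2_measure a" and V: "distr M borel V = chi2_measure b"
    and a: "0 < a" and b: "0 < b" and A[measurable]: "A \<in> sets borel" and B[measurable]: "B \<in> sets borel"
  shows "emeasure M {\<omega>\<in>space M. U \<omega> + V \<omega> \<in> A \<and> U \<omega> / (U \<omega> + V \<omega>) \<in> B}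
    = emeasure (chi2_measure (a + b)) A * emeasure (beta_measure a b) B"
proof -
  have [measurable]: "random_variable borel U" "random_variable borel V"
    using indep_rv_rv1[OF indep] indep_rv_rv2[OF indep] .
  have "emeasure M {\<omega>\<in>space M. U \<omega> + V \<omega> \<in> A \<and> U \<omega> / (U \<omega> + V \<omega>) \<in> B}
      = emeasure (distr M (borel \<Otimes>\<^sub>M borel) (\<lambda>\<omega>. (U \<omega>, V \<omega>)))
          {p \<in> space (borel \<Otimes>\<^sub>M borel). fst p + snd p \<in> A \<and> fst p / (fst p + snd p) \<in> B}"
  proof -
    have "{p \<in> space (borel \<Otimes>\<^sub>M borel). fst p + snd p \<in> A \<and> fst p / (fst p + snd p) \<in> B} \<in> sets (borel \<Otimes>\<^sub>M borel)"
      by measurable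
    then show ?thesis
      by (subst emeasure_distr) (auto simp: space_pair_measure intro!: arg_cong[where f="emeasure M"])
  qed
  also have "\<dots> = emeasure (chi2_measure (a + b)) A * emeasure (beta_measure a b) B"
    using indep_rv_distr_pair[OF indep] U V emeasure_chi2_pair_sum_ratio[OF a b A B] by simp
  finally show ?thesis .
qed

lemma (in prob_space)
  assumes Z: "random_variable borel Z" and distr_Z: "distr M borel Z = chi2_measure a"
  shows AE_chi2_rv_0: "a = 0 \<Longrightarrow> AE \<omega> in M. Z \<omega> = 0"
    and AE_chi2_rv_pos: "0 < a \<Longrightarrow> AE \<omega> in M. 0 < Z \<omega>"
    and AE_chi2_rv_nonneg: "0 \<le> a \<Longrightarrow> AE \<omega> in M. 0 \<le> Z \<omega>"
proof -
  show "AE \<omega> in M. Z \<omega> = 0" if "a = 0"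
    by (rule AE_distrD[OF Z]) (unfold distr_Z that, rule AE_chi2_measure_0)
  show "AE \<omega> in M. 0 < Z \<omega>" if "0 < a"
    by (rule AE_distrD[OF Z]) (unfold distr_Z, rule AE_chi2_measure_pos[OF that])
  show "AE \<omega> in M. 0 \<le> Z \<omega>" if "0 \<le> a"
    by (rule AE_distrD[OF Z]) (unfold distr_Z, rule AE_chi2_measure_nonneg[OF that])
qed

lemma (in prob_space) chi2_sum_ratio_pos:
  assumes indep: "indep_rv borel U borel V"
    and U: "distr M borel U = chi2_measure a" and V: "distr M borel V = chi2_measure b"
    and a: "0 < a" and b: "0 < b"
  shows "distr M borel (\<lambda>\<omega>. U \<omega> + V \<omega>) = chi2_measure (a + b)"
    and "indep_rv borel (\<lambda>\<omega>. U \<omega> + V \<omega>) borel (\<lambda>\<omega>. U \<omega> / (U \<omega> + V \<omega>))"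
    and "distr M borel (\<lambda>\<omega>. U \<omega> / (U \<omega> + V \<omega>)) = beta_measure a b"
proof -
  have [measurable]: "random_variable borel U" "random_variable borel V"
    using indep_rv_rv1[OF indep] indep_rv_rv2[OF indep] .
  note joint = emeasure_chi2_sum_ratio[OF indep U V a b]
  have sum: "emeasure M {\<omega>\<in>space M. U \<omega> + V \<omega> \<in> A} = emeasure (chi2_measure (a + b)) A"
    if [measurable]: "A \<in> sets borel" for A
    using joint[OF that, of UNIV] emeasure_beta_measure_UNIV[OF a b] by simp
  have "emeasure (chi2_measure (a + b)) UNIV = 1"
    using sum[of UNIV] emeasure_space_1 by simp
  then have ratio: "emeasure M {\<omega>\<in>space M. U \<omega> / (U \<omega> + V \<omega>) \<in> B} = emeasure (beta_measure a b) B"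
    if [measurable]: "B \<in> sets borel" for B
    using joint[OF _ that, of UNIV] by simp
  show "distr M borel (\<lambda>\<omega>. U \<omega> + V \<omega>) = chi2_measure (a + b)"
    by (rule measure_eqI) (auto simp: emeasure_distr sum vimage_def Int_def conj_commute)
  show "distr M borel (\<lambda>\<omega>. U \<omega> / (U \<omega> + V \<omega>)) = beta_measure a b"
    by (rule measure_eqI) (auto simp: emeasure_distr ratio vimage_def Int_def conj_commute)
  show "indep_rv borel (\<lambda>\<omega>. U \<omega> + V \<omega>) borel (\<lambda>\<omega>. U \<omega> / (U \<omega> + V \<omega>))"
  proof (rule indep_rvI)
    fix A B :: "real set" assume [measurable]: "A \<in> sets borel" "B \<in> sets borel"
    have "ennreal (prob {\<omega>\<in>space M. U \<omega> + V \<omega> \<in> A \<and> U \<omega> / (U \<omega> + V \<omega>) \<in> B})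
        = ennreal (prob {\<omega>\<in>space M. U \<omega> + V \<omega> \<in> A}) * ennreal (prob {\<omega>\<in>space M. U \<omega> / (U \<omega> + V \<omega>) \<in> B})"
      using joint sum ratio by (simp add: emeasure_eq_measure)
    then show "prob {\<omega>\<in>space M. U \<omega> + V \<omega> \<in> A \<and> U \<omega> / (U \<omega> + V \<omega>) \<in> B}
        = prob {\<omega>\<in>space M. U \<omega> + V \<omega> \<in> A} * prob {\<omega>\<in>space M. U \<omega> / (U \<omega> + V \<omega>) \<in> B}"
      by (simp add: ennreal_mult[symmetric])
  qed simp_all
qed

lemma (in prob_space) chi2_sum_ratio:
  assumes indep: "indep_rv borel U borel V"
    and U: "distr M borel U = chi2_measure a" and V: "distr M borel V = chi2_measure b"
    and a: "0 \<le> a" and b: "0 \<le> b"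
  shows distr_chi2_sum: "distr M borel (\<lambda>\<omega>. U \<omega> + V \<omega>) = chi2_measure (a + b)" (is ?sum)
    and indep_rv_chi2_sum_ratio: "indep_rv borel (\<lambda>\<omega>. U \<omega> + V \<omega>) borel (\<lambda>\<omega>. U \<omega> / (U \<omega> + V \<omega>))" (is ?indep)
    and distr_chi2_ratio: "0 < a \<Longrightarrow> distr M borel (\<lambda>\<omega>. U \<omega> / (U \<omega> + V \<omega>)) = beta_measure a b" (is "_ \<Longrightarrow> ?beta")
proof -
  have Um[measurable]: "random_variable borel U" and Vm[measurable]: "random_variable borel V"
    using indep_rv_rv1[OF indep] indep_rv_rv2[OF indep] .
  consider "a = 0" | "0 < a" "b = 0" | "0 < a" "0 < b"
    using a b by linarith
  then have "?sum \<and> ?indep \<and> (0 < a \<longrightarrow> ?beta)"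
  proof cases
    case 1
    have U0: "AE \<omega> in M. U \<omega> = 0"
      using AE_chi2_rv_0[OF Um U 1] .
    have "distr M borel (\<lambda>\<omega>. U \<omega> + V \<omega>) = distr M borel V"
      using U0 by (intro distr_cong_AE) (auto elim!: eventually_mono)
    moreover have ?indep
      using U0 by (intro indep_rv_AE_const[where c=0]) (auto elim!: eventually_mono)
    ultimately show ?thesis
      using V 1 by simp
  next
    case 2
    have V0: "AE \<omega> in M. V \<omega> = 0"
      using AE_chi2_rv_0[OF Vm V 2(2)] .
    with AE_chi2_rv_pos[OF Um U 2(1)] have ratio1: "AE \<omega> in M. U \<omega> / (U \<omega> + V \<omega>) = 1"
      by eventually_elim auto
    have "distr M borel (\<lambda>\<omega>. U \<omega> + V \<omega>) = distr M borel U"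
      using V0 by (intro distr_cong_AE) (auto elim!: eventually_mono)
    moreover have ?indep
      using ratio1 by (intro indep_rv_AE_const) auto
    moreover have "distr M borel (\<lambda>\<omega>. U \<omega> / (U \<omega> + V \<omega>)) = distr M borel (\<lambda>\<omega>. 1::real)"
      using ratio1 by (intro distr_cong_AE) auto
    ultimately show ?thesis
      using U 2 by (simp add: beta_measure_def)
  next
    case 3
    then show ?thesis
      using chi2_sum_ratio_pos[OF indep U V] by simp
  qed
  then show ?sum ?indep "0 < a \<Longrightarrow> ?beta"
    by auto
qed

lemma (in prob_space) distr_sum_chi2:
  assumes "finite J" and "indep_vars (\<lambda>_. borel) Z J"
    and "\<And>j. j \<in> J \<Longrightarrow> distr M borel (Z j) = chi2_measure (a j)"
    and "\<And>j. j \<in> J \<Longrightarrow> 0 \<le> a j"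
  shows "distr M borel (\<lambda>\<omega>. \<Sum>j\<in>J. Z j \<omega>) = chi2_measure (\<Sum>j\<in>J. a j)"
  using assms
proof (induction J rule: finite_induct)
  case empty
  then show ?case
    by (simp add: chi2_measure_def)
next
  case (insert i J)
  have "distr M borel (\<lambda>\<omega>. \<Sum>j\<in>J. Z j \<omega>) = chi2_measure (\<Sum>j\<in>J. a j)"
    using insert.IH[OF indep_vars_subset[OF insert.prems(1)]] insert.prems by auto
  moreover have "indep_rv borel (\<lambda>\<omega>. \<Sum>j\<in>J. Z j \<omega>) borel (Z i)"
    using indep_vars_sum[OF insert.hyps insert.prems(1)] by (rule indep_rv_sym[OF indep_var_imp_indep_rv])
  ultimately have "distr M borel (\<lambda>\<omega>. (\<Sum>j\<in>J. Z j \<omega>) + Z i \<omega>) = chi2_measure ((\<Sum>j\<in>J. a j) + a i)"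
    using insert.prems by (intro distr_chi2_sum) (auto intro!: sum_nonneg)
  then show ?case
    using insert.hyps by (simp add: add.commute)
qed

definition dirichlet_proj :: "nat \<Rightarrow> (nat \<Rightarrow> real) \<Rightarrow> nat \<Rightarrow> real" where
  "dirichlet_proj D z = (\<lambda>i\<in>{..<D}. z i / (\<Sum>k\<le>D. z k))"

lemma dirichlet_measure_eq_distr:
  "dirichlet_measure D a = distr (PiM {..D} (\<lambda>i. chi2_measure (a i))) (PiM {..<D} (\<lambda>_. borel)) (dirichlet_proj D)"
  by (simp add: dirichlet_measure_def dirichlet_proj_def[abs_def])

lemma dirichlet_proj_borel [measurable]:
  "dirichlet_proj D \<in> measurable (PiM {..D} (\<lambda>_. borel)) (PiM {..<D} (\<lambda>_. borel))"
  unfolding dirichlet_proj_def by measurable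

lemma dirichlet_proj_cong: "(\<And>i. i \<le> D \<Longrightarrow> z i = z' i) \<Longrightarrow> dirichlet_proj D z = dirichlet_proj D z'"
  by (auto simp: dirichlet_proj_def intro!: restrict_ext sum.cong)

lemma dirichlet_proj_in_space: "dirichlet_proj D z \<in> space (PiM {..<D} (\<lambda>_. borel))"
  by (simp add: dirichlet_proj_def space_PiM)

lemma measurable_dirichlet_proj [measurable]:
  assumes "\<And>i. i \<in> {..D} \<Longrightarrow> (\<lambda>x. f x i) \<in> borel_measurable N"
  shows "(\<lambda>x. dirichlet_proj D (f x)) \<in> measurable N (PiM {..<D} (\<lambda>_. borel))"
  unfolding dirichlet_proj_def using assms by measurable

definition stick_break :: "nat \<Rightarrow> (nat \<Rightarrow> real) \<times> real \<Rightarrow> nat \<Rightarrow> real" where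
  "stick_break D p = (\<lambda>i\<in>{..<Suc D}. if i < D then snd p * fst p i else snd p * (1 - (\<Sum>j<D. fst p j)))"

lemma stick_break_borel [measurable]:
  "stick_break D \<in> measurable (PiM {..<D} (\<lambda>_. borel) \<Otimes>\<^sub>M borel) (PiM {..<Suc D} (\<lambda>_. borel))"
  unfolding stick_break_def
proof (rule measurable_restrict)
  fix i
  show "(\<lambda>p::(nat \<Rightarrow> real) \<times> real. if i < D then snd p * fst p i else snd p * (1 - (\<Sum>j<D. fst p j)))
      \<in> borel_measurable (PiM {..<D} (\<lambda>_. borel) \<Otimes>\<^sub>M borel)"
  proof (cases "i < D")
    case True
    then have [measurable]: "(\<lambda>x. x i) \<in> borel_measurable (PiM {..<D} (\<lambda>_. borel))"
      by (intro measurable_component_singleton) auto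
    show ?thesis
      using True by simp measurable
  qed simp
qed

lemma stick_break_dirichlet_proj:
  fixes z :: "nat \<Rightarrow> real"
  assumes nonneg: "\<And>k. k \<le> D \<Longrightarrow> 0 \<le> z k"
  shows "stick_break D (dirichlet_proj D z, (\<Sum>k\<le>D. z k) / ((\<Sum>k\<le>D. z k) + z (Suc D))) = dirichlet_proj (Suc D) z"
  unfolding stick_break_def dirichlet_proj_def[of "Suc D"] fst_conv snd_conv
proof (rule restrict_ext)
  fix i assume i: "i \<in> {..<Suc D}"
  define s where "s = (\<Sum>k\<le>D. z k)"
  have total: "(\<Sum>k\<le>Suc D. z k) = s + z (Suc D)" and s_split: "s = (\<Sum>j<D. z j) + z D"
    by (simp_all add: s_def lessThan_Suc_atMost[symmetric])
  show "(if i < D then s / (s + z (Suc D)) * dirichlet_proj D z i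
        else s / (s + z (Suc D)) * (1 - (\<Sum>j<D. dirichlet_proj D z j)))
      = z i / (\<Sum>k\<le>Suc D. z k)"
  proof (cases "s = 0")
    case True
    then have "z k = 0" if "k \<le> D" for k
      using nonneg that unfolding s_def by (subst (asm) sum_nonneg_eq_0_iff) auto
    then show ?thesis
      using i True by (auto simp: dirichlet_proj_def)
  next
    case False
    have "(\<Sum>j<D. dirichlet_proj D z j) = (\<Sum>j<D. z j) / s"
      by (simp add: dirichlet_proj_def s_def sum_divide_distrib)
    then have "1 - (\<Sum>j<D. dirichlet_proj D z j) = z D / s"
      using False s_split by (simp add: field_simps)
    then show ?thesis
      using i False by (auto simp: dirichlet_proj_def s_def[symmetric] less_Suc_eq)
  qed
qed

lemma (in prob_space) indep_rv_sum_ratio_extend: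
  fixes S V :: "'a \<Rightarrow> real"
  assumes RS: "indep_rv Q R borel S" and RS_V: "indep_rv (Q \<Otimes>\<^sub>M borel) (\<lambda>\<omega>. (R \<omega>, S \<omega>)) borel V"
    and sum_ratio: "indep_rv borel (\<lambda>\<omega>. S \<omega> + V \<omega>) borel (\<lambda>\<omega>. S \<omega> / (S \<omega> + V \<omega>))"
  shows "indep_rv (Q \<Otimes>\<^sub>M borel) (\<lambda>\<omega>. (R \<omega>, S \<omega> / (S \<omega> + V \<omega>))) borel (\<lambda>\<omega>. S \<omega> + V \<omega>)"
proof -
  have "indep_rv Q R (borel \<Otimes>\<^sub>M borel) (\<lambda>\<omega>. (S \<omega>, V \<omega>))"
    by (rule indep_rv_pair_assoc_right[OF RS RS_V])
  moreover have "(\<lambda>p::real \<times> real. (fst p / (fst p + snd p), fst p + snd p)) \<in> measurable (borel \<Otimes>\<^sub>M borel) (borel \<Otimes>\<^sub>M borel)"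
    by measurable
  ultimately have "indep_rv Q R (borel \<Otimes>\<^sub>M borel) (\<lambda>\<omega>. (S \<omega> / (S \<omega> + V \<omega>), S \<omega> + V \<omega>))"
    by (rule indep_rv_compose_eq[OF _ measurable_id]) simp_all
  then show ?thesis
    by (rule indep_rv_pair_assoc_left[OF _ indep_rv_sym[OF sum_ratio]])
qed

text \<open>Induction on \<open>D\<close>: splitting off the last coordinate by \<open>stick_break\<close> reduces the step to the
  two-variable case \<open>chi2_sum_ratio\<close>.\<close>

lemma (in prob_space) indep_rv_sum_dirichlet_proj:
  fixes Z :: "nat \<Rightarrow> 'a \<Rightarrow> real"
  assumes "indep_vars (\<lambda>_. borel) Z {..D}"
    and "\<And>i. i \<le> D \<Longrightarrow> distr M borel (Z i) = chi2_measure (a i)"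
    and "\<And>i. i \<le> D \<Longrightarrow> 0 \<le> a i"
  shows "indep_rv borel (\<lambda>\<omega>. \<Sum>k\<le>D. Z k \<omega>) (PiM {..<D} (\<lambda>_. borel)) (\<lambda>\<omega>. dirichlet_proj D (\<lambda>i. Z i \<omega>))"
  using assms
proof (induction D)
  case 0
  have [measurable]: "random_variable borel (Z 0)"
    using 0(1) by (auto simp: indep_vars_def)
  have "dirichlet_proj 0 z = (\<lambda>_. undefined)" for z
    by (auto simp: dirichlet_proj_def)
  then show ?case
    by (intro indep_rv_AE_const[where c="\<lambda>_. undefined"]) simp_all
next
  case (Suc D)
  define S where "S \<omega> = (\<Sum>k\<le>D. Z k \<omega>)" for \<omega>
  define R where "R \<omega> = dirichlet_proj D (\<lambda>i. Z i \<omega>)" for \<omega>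
  have Zm[measurable]: "i \<le> Suc D \<Longrightarrow> random_variable borel (Z i)" for i
    using Suc.prems(1) by (auto simp: indep_vars_def)
  have indep_D: "indep_vars (\<lambda>_. borel) Z {..D}"
    using Suc.prems(1) by (rule indep_vars_subset) auto
  have R_S: "indep_rv (PiM {..<D} (\<lambda>_. borel)) R borel S"
    unfolding R_def S_def using Suc.prems by (intro indep_rv_sym[OF Suc.IH[OF indep_D]]) auto
  have blocks: "indep_rv (PiM {..D} (\<lambda>_. borel)) (\<lambda>\<omega>. restrict (\<lambda>i. Z i \<omega>) {..D})
      (PiM {Suc D} (\<lambda>_. borel)) (\<lambda>\<omega>. restrict (\<lambda>i. Z i \<omega>) {Suc D})"
    by (rule indep_var_imp_indep_rv, rule indep_var_restrict[OF Suc.prems(1)]) auto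
  have RS_last: "indep_rv (PiM {..<D} (\<lambda>_. borel) \<Otimes>\<^sub>M borel) (\<lambda>\<omega>. (R \<omega>, S \<omega>)) borel (Z (Suc D))"
    by (rule indep_rv_compose_eq[OF blocks, where f="\<lambda>z. (dirichlet_proj D z, \<Sum>k\<le>D. z k)" and g="\<lambda>z. z (Suc D)"])
      (auto simp: R_def S_def intro: dirichlet_proj_cong)
  have "indep_rv borel S borel (Z (Suc D))"
    by (rule indep_rv_compose_eq[OF RS_last measurable_snd measurable_id]) simp_all
  moreover have "distr M borel S = chi2_measure (\<Sum>k\<le>D. a k)"
    unfolding S_def using Suc.prems by (intro distr_sum_chi2[OF _ indep_D]) auto
  ultimately have "indep_rv borel (\<lambda>\<omega>. S \<omega> + Z (Suc D) \<omega>) borel (\<lambda>\<omega>. S \<omega> / (S \<omega> + Z (Suc D) \<omega>))"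
    using Suc.prems by (intro indep_rv_chi2_sum_ratio) (auto intro: sum_nonneg)
  from indep_rv_sum_ratio_extend[OF R_S RS_last this]
  have broken: "indep_rv (PiM {..<Suc D} (\<lambda>_. borel)) (\<lambda>\<omega>. stick_break D (R \<omega>, S \<omega> / (S \<omega> + Z (Suc D) \<omega>)))
      borel (\<lambda>\<omega>. S \<omega> + Z (Suc D) \<omega>)"
    by (rule indep_rv_compose_eq[OF _ stick_break_borel measurable_id]) simp_all
  have "AE \<omega> in M. \<forall>k\<in>{..Suc D}. 0 \<le> Z k \<omega>"
    using Suc.prems(2,3) by (intro AE_finite_allI AE_chi2_rv_nonneg[OF Zm]) auto
  then have unbroken: "AE \<omega> in M. stick_break D (R \<omega>, S \<omega> / (S \<omega> + Z (Suc D) \<omega>)) = dirichlet_proj (Suc D) (\<lambda>i. Z i \<omega>)"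
    by eventually_elim (unfold R_def S_def, rule stick_break_dirichlet_proj, auto)
  have "indep_rv (PiM {..<Suc D} (\<lambda>_. borel)) (\<lambda>\<omega>. dirichlet_proj (Suc D) (\<lambda>i. Z i \<omega>))
      borel (\<lambda>\<omega>. \<Sum>k\<le>Suc D. Z k \<omega>)"
    by (rule indep_rv_AE_cong[OF broken _ _ unbroken]) (simp_all add: S_def)
  then show ?case
    by (rule indep_rv_sym)
qed

lemma (in prob_space) distr_dirichlet_proj:
  fixes Z :: "nat \<Rightarrow> 'a \<Rightarrow> real"
  assumes indep: "indep_vars (\<lambda>_. borel) Z {..D}"
    and distr_Z: "\<And>i. i \<le> D \<Longrightarrow> distr M borel (Z i) = chi2_measure (a i)"
  shows "distr M (PiM {..<D} (\<lambda>_. borel)) (\<lambda>\<omega>. dirichlet_proj D (\<lambda>i. Z i \<omega>)) = dirichlet_measure D a"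
proof -
  have [measurable]: "i \<le> D \<Longrightarrow> random_variable borel (Z i)" for i
    using indep by (auto simp: indep_vars_def)
  have "distr M (PiM {..D} (\<lambda>_. borel)) (\<lambda>\<omega>. \<lambda>i\<in>{..D}. Z i \<omega>) = PiM {..D} (\<lambda>i. distr M borel (Z i))"
    using indep by (subst (asm) indep_vars_iff_distr_eq_PiM') auto
  also have "\<dots> = PiM {..D} (\<lambda>i. chi2_measure (a i))"
    by (rule PiM_cong) (auto simp: distr_Z)
  finally have "dirichlet_measure D a
      = distr (distr M (PiM {..D} (\<lambda>_. borel)) (\<lambda>\<omega>. \<lambda>i\<in>{..D}. Z i \<omega>)) (PiM {..<D} (\<lambda>_. borel)) (dirichlet_proj D)"
    by (simp add: dirichlet_measure_eq_distr)
  also have "\<dots> = distr M (PiM {..<D} (\<lambda>_. borel)) (\<lambda>\<omega>. dirichlet_proj D (\<lambda>i\<in>{..D}. Z i \<omega>))"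
    by (subst distr_distr) (auto simp: comp_def)
  also have "\<dots> = distr M (PiM {..<D} (\<lambda>_. borel)) (\<lambda>\<omega>. dirichlet_proj D (\<lambda>i. Z i \<omega>))"
    by (intro distr_cong dirichlet_proj_cong) auto
  finally show ?thesis ..
qed

section \<open>Multinomial identities\<close>

definition multi_indices_le :: "nat \<Rightarrow> nat \<Rightarrow> (nat \<Rightarrow> nat) set" where
  "multi_indices_le D m = {j. (\<forall>i\<ge>D. j i = 0) \<and> (\<Sum>i<D. j i) \<le> m}"

lemma finite_multi_indices_le: "finite (multi_indices_le D m)"
proof (rule finite_subset)
  show "multi_indices_le D m \<subseteq> {j. \<forall>i. (i \<in> {..<D} \<longrightarrow> j i \<in> {..m}) \<and> (i \<notin> {..<D} \<longrightarrow> j i = 0)}"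
  proof
    fix j assume j: "j \<in> multi_indices_le D m"
    have "j i \<le> (\<Sum>i<D. j i)" if "i < D" for i
      using that by (intro member_le_sum) auto
    then show "j \<in> {j. \<forall>i. (i \<in> {..<D} \<longrightarrow> j i \<in> {..m}) \<and> (i \<notin> {..<D} \<longrightarrow> j i = 0)}"
      using j by (auto simp: multi_indices_le_def intro: order_trans)
  qed
  show "finite {j. \<forall>i. (i \<in> {..<D} \<longrightarrow> j i \<in> {..m}) \<and> (i \<notin> {..<D} \<longrightarrow> (j i :: nat) = 0)}"
    by (rule finite_set_of_finite_funs) auto
qed

lemma multi_indices_le_Suc:
  "bij_betw (\<lambda>(t, j). j(D := t)) (SIGMA t:{..m}. multi_indices_le D (m - t)) (multi_indices_le (Suc D) m)"
proof (rule bij_betwI[where g="\<lambda>j. (j D, j(D := 0))"])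
  have sum_upd: "(\<Sum>i<D. (j(D := t)) i) = (\<Sum>i<D. j i)" for j :: "nat \<Rightarrow> nat" and t
    by (rule sum.cong) auto
  show "(\<lambda>(t, j). j(D := t)) \<in> (SIGMA t:{..m}. multi_indices_le D (m - t)) \<rightarrow> multi_indices_le (Suc D) m"
    by (auto simp: multi_indices_le_def sum_upd)
  show "(\<lambda>j. (j D, j(D := 0))) \<in> multi_indices_le (Suc D) m \<rightarrow> (SIGMA t:{..m}. multi_indices_le D (m - t))"
    by (auto simp: multi_indices_le_def sum_upd)
  show "(\<lambda>j. (j D, j(D := 0))) ((\<lambda>(t, j). j(D := t)) p) = p" if "p \<in> (SIGMA t:{..m}. multi_indices_le D (m - t))" for p
    using that by (auto simp: multi_indices_le_def fun_eq_iff)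
qed auto

definition multinomial_term :: "nat \<Rightarrow> nat \<Rightarrow> (nat \<Rightarrow> real) \<Rightarrow> real \<Rightarrow> (nat \<Rightarrow> nat) \<Rightarrow> real" where
  "multinomial_term D m x y j = fact m / ((\<Prod>i<D. fact (j i)) * fact (m - (\<Sum>i<D. j i)))
     * (\<Prod>i<D. x i ^ j i) * y ^ (m - (\<Sum>i<D. j i))"

lemma multinomial_term_upd:
  assumes j: "j \<in> multi_indices_le D (m - t)" and t: "t \<le> m"
  shows "multinomial_term (Suc D) m x y (j(D := t)) = of_nat (m choose t) * x D ^ t * multinomial_term D (m - t) x y j"
proof -
  define s where "s = (\<Sum>i<D. j i)"
  define P where "P = (\<Prod>i<D. fact (j i) :: real)"
  define Q where "Q = (\<Prod>i<D. x i ^ j i)"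
  have "(\<Sum>i<D. (j(D := t)) i) = s" "(\<Prod>i<D. fact ((j(D := t)) i) :: real) = P" "(\<Prod>i<D. x i ^ (j(D := t)) i) = Q"
    unfolding s_def P_def Q_def by (auto intro!: sum.cong prod.cong)
  then have "(\<Sum>i<Suc D. (j(D := t)) i) = s + t" "(\<Prod>i<Suc D. fact ((j(D := t)) i) :: real) = P * fact t"
    "(\<Prod>i<Suc D. x i ^ (j(D := t)) i) = Q * x D ^ t"
    by simp_all
  moreover have "m - (s + t) = m - t - s"
    by simp
  ultimately have "multinomial_term (Suc D) m x y (j(D := t))
      = fact m / (P * fact t * fact (m - t - s)) * (Q * x D ^ t) * y ^ (m - t - s)"
    by (simp only: multinomial_term_def)
  also have "\<dots> = (fact m / (fact t * fact (m - t))) * x D ^ t * (fact (m - t) / (P * fact (m - t - s)) * Q * y ^ (m - t - s))"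
    by (simp add: P_def field_simps)
  also have "\<dots> = of_nat (m choose t) * x D ^ t * multinomial_term D (m - t) x y j"
    by (simp add: multinomial_term_def binomial_fact[OF t] s_def P_def Q_def)
  finally show ?thesis .
qed

lemma multinomial_expansion:
  fixes x :: "nat \<Rightarrow> real"
  shows "(\<Sum>j\<in>multi_indices_le D m. multinomial_term D m x y j) = ((\<Sum>i<D. x i) + y) ^ m"
proof (induction D arbitrary: m)
  case 0
  have "multi_indices_le 0 m = {\<lambda>_. 0}"
    by (auto simp: multi_indices_le_def)
  then show ?case
    by (simp add: multinomial_term_def)
next
  case (Suc D)
  have "(\<Sum>j\<in>multi_indices_le (Suc D) m. multinomial_term (Suc D) m x y j)
      = (\<Sum>p\<in>(SIGMA t:{..m}. multi_indices_le D (m - t)). multinomial_term (Suc D) m x y ((\<lambda>(t, j). j(D := t)) p))"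
    by (rule sum.reindex_bij_betw[OF multi_indices_le_Suc, symmetric])
  also have "\<dots> = (\<Sum>(t, j)\<in>(SIGMA t:{..m}. multi_indices_le D (m - t)). multinomial_term (Suc D) m x y (j(D := t)))"
    by (simp add: case_prod_beta)
  also have "\<dots> = (\<Sum>t\<le>m. \<Sum>j\<in>multi_indices_le D (m - t). multinomial_term (Suc D) m x y (j(D := t)))"
    by (rule sum.Sigma[symmetric]) (auto simp: finite_multi_indices_le)
  also have "\<dots> = (\<Sum>t\<le>m. of_nat (m choose t) * x D ^ t * (\<Sum>j\<in>multi_indices_le D (m - t). multinomial_term D (m - t) x y j))"
  proof (rule sum.cong[OF refl])
    fix t assume "t \<in> {..m}"
    then have "(\<Sum>j\<in>multi_indices_le D (m - t). multinomial_term (Suc D) m x y (j(D := t)))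
        = (\<Sum>j\<in>multi_indices_le D (m - t). of_nat (m choose t) * x D ^ t * multinomial_term D (m - t) x y j)"
      by (intro sum.cong[OF refl] multinomial_term_upd) auto
    then show "(\<Sum>j\<in>multi_indices_le D (m - t). multinomial_term (Suc D) m x y (j(D := t)))
        = of_nat (m choose t) * x D ^ t * (\<Sum>j\<in>multi_indices_le D (m - t). multinomial_term D (m - t) x y j)"
      by (simp add: sum_distrib_left)
  qed
  also have "\<dots> = (\<Sum>t\<le>m. of_nat (m choose t) * x D ^ t * ((\<Sum>i<D. x i) + y) ^ (m - t))"
    by (simp only: Suc.IH)
  also have "\<dots> = (x D + ((\<Sum>i<D. x i) + y)) ^ m"
    by (simp add: binomial_ring mult_ac)
  also have "\<dots> = ((\<Sum>i<Suc D. x i) + y) ^ m"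
    by (simp add: add_ac)
  finally show ?case .
qed

definition complete_multi_index :: "nat \<Rightarrow> nat \<Rightarrow> (nat \<Rightarrow> nat) \<Rightarrow> nat \<Rightarrow> nat" where
  "complete_multi_index D m j k = (if k < D then j k else m - (\<Sum>i<D. j i))"

lemma sum_complete_multi_index:
  "j \<in> multi_indices_le D m \<Longrightarrow> (\<Sum>k\<le>D. complete_multi_index D m j k) = m"
  by (simp add: complete_multi_index_def multi_indices_le_def lessThan_Suc_atMost[symmetric])

definition poisson_density :: "real \<Rightarrow> nat \<Rightarrow> real" where
  "poisson_density r k = r ^ k / fact k * exp (- r)"

text \<open>Independent Poisson counts conditioned on their total are multinomial.\<close>

lemma prod_poisson_density_complete_multi_index:
  fixes r :: "nat \<Rightarrow> real" and D :: nat
  defines "R \<equiv> \<Sum>k\<le>D. r k"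
  assumes R: "R \<noteq> 0" and j: "j \<in> multi_indices_le D m"
  shows "(\<Prod>k\<le>D. poisson_density (r k) (complete_multi_index D m j k))
    = poisson_density R m * multinomial_term D m (\<lambda>i. r i / R) (r D / R) j"
proof -
  define s where "s = (\<Sum>i<D. j i)"
  have m: "s + (m - s) = m"
    using j by (simp add: multi_indices_le_def s_def)
  have split: "poisson_density (r k) e = R ^ e * (r k / R) ^ e / fact e * exp (- r k)" for k e
    using R by (simp add: poisson_density_def power_divide)
  have "(\<Prod>k<D. poisson_density (r k) (complete_multi_index D m j k)) = (\<Prod>k<D. poisson_density (r k) (j k))"
    by (rule prod.cong) (auto simp: complete_multi_index_def)
  then have "(\<Prod>k\<le>D. poisson_density (r k) (complete_multi_index D m j k))
      = (\<Prod>k<D. poisson_density (r k) (j k)) * poisson_density (r D) (m - s)"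
    by (simp add: lessThan_Suc_atMost[symmetric] complete_multi_index_def s_def)
  also have "\<dots> = (R ^ s * (\<Prod>k<D. (r k / R) ^ j k) / (\<Prod>k<D. fact (j k)) * exp (- (\<Sum>k<D. r k)))
      * (R ^ (m - s) * (r D / R) ^ (m - s) / fact (m - s) * exp (- r D))"
    by (simp add: split prod.distrib prod_dividef power_sum s_def exp_sum[symmetric] sum_negf)
  also have "\<dots> = (R ^ s * R ^ (m - s)) * (exp (- (\<Sum>k<D. r k)) * exp (- r D))
      * ((\<Prod>k<D. (r k / R) ^ j k) * (r D / R) ^ (m - s)) / ((\<Prod>k<D. fact (j k)) * fact (m - s))"
    by (simp add: field_simps)
  also have "\<dots> = R ^ m * exp (- R) * ((\<Prod>k<D. (r k / R) ^ j k) * (r D / R) ^ (m - s)) / ((\<Prod>k<D. fact (j k)) * fact (m - s))"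
    using m by (simp add: R_def lessThan_Suc_atMost[symmetric] exp_add[symmetric] power_add[symmetric])
  also have "\<dots> = poisson_density R m * multinomial_term D m (\<lambda>i. r i / R) (r D / R) j"
    by (simp add: poisson_density_def multinomial_term_def s_def[symmetric] field_simps)
  finally show ?thesis .
qed

lemma sum_multinomial_term_eq_1:
  fixes r :: "nat \<Rightarrow> real"
  assumes "(\<Sum>k\<le>D. r k) \<noteq> 0"
  shows "(\<Sum>j\<in>multi_indices_le D m. multinomial_term D m (\<lambda>i. r i / (\<Sum>k\<le>D. r k)) (r D / (\<Sum>k\<le>D. r k)) j) = 1"
proof -
  have "(\<Sum>i<D. r i / (\<Sum>k\<le>D. r k)) + r D / (\<Sum>k\<le>D. r k) = 1"
    using assms by (simp add: sum_divide_distrib[symmetric] add_divide_distrib[symmetric] lessThan_Suc_atMost[symmetric])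
  then show ?thesis
    by (simp add: multinomial_expansion)
qed

section \<open>The Poisson mixture model\<close>

lemma borel_measurable_sum_components:
  assumes "\<And>j. j \<in> J \<Longrightarrow> s j \<in> I"
  shows "(\<lambda>z::'i \<Rightarrow> real. \<Sum>j\<in>J. z (s j)) \<in> borel_measurable (PiM I (\<lambda>_. borel))"
  using assms measurable_component_singleton[of _ I "\<lambda>_. borel"] by (intro borel_measurable_sum) simp

lemma add_divide_convex_split:
  fixes y p a b :: real
  assumes "0 < y" "0 \<le> p" "p = 0 \<Longrightarrow> b = 0"
  shows "(a + b) / (y + p) = y / (y + p) * (a / y) + (1 - y / (y + p)) * (b / p)"
proof (cases "p = 0")
  case False
  then have "1 - y / (y + p) = p / (y + p)"
    using assms by (simp add: field_simps)
  then show ?thesis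
    using assms False by (simp add: add_divide_distrib)
qed (use assms in simp)

locale noncentral_dirichlet_model = prob_space M for M :: "'a measure" +
  fixes D :: nat and \<alpha> lam :: "nat \<Rightarrow> real" and Y :: "nat \<Rightarrow> 'a \<Rightarrow> real"
    and N :: "nat \<Rightarrow> 'a \<Rightarrow> nat" and F :: "nat \<Rightarrow> nat \<Rightarrow> 'a \<Rightarrow> real"
  assumes \<alpha>_pos: "\<And>i. i \<le> D \<Longrightarrow> 0 < \<alpha> i"
    and lam_sum_pos: "0 < (\<Sum>i\<le>D. lam i)"
    and indep: "indep_vars (\<lambda>_. borel)
        (\<lambda>s \<omega>. case s of SY i \<Rightarrow> Y i \<omega> | SM i \<Rightarrow> real (N i \<omega>) | SF i j \<Rightarrow> F i j \<omega>)
        (SY ` {..D} \<union> SM ` {..D} \<union> {SF i j | i j. i \<le> D \<and> j \<ge> 1})"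
    and distr_Y: "\<And>i. i \<le> D \<Longrightarrow> distr M borel (Y i) = chi2_measure (\<alpha> i)"
    and prob_N: "\<And>i k. i \<le> D \<Longrightarrow> prob {\<omega> \<in> space M. N i \<omega> = k} = poisson_density (lam i / 2) k"
    and distr_F: "\<And>i j. i \<le> D \<Longrightarrow> 1 \<le> j \<Longrightarrow> distr M borel (F i j) = chi2_measure 1"
begin

definition source :: "src \<Rightarrow> 'a \<Rightarrow> real" where
  "source s \<omega> = (case s of SY i \<Rightarrow> Y i \<omega> | SM i \<Rightarrow> real (N i \<omega>) | SF i j \<Rightarrow> F i j \<omega>)"

definition sources :: "src set" where
  "sources = SY ` {..D} \<union> SM ` {..D} \<union> {SF i j | i j. i \<le> D \<and> j \<ge> 1}"

lemma source_simps [simp]: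
  "source (SY i) = Y i" "source (SM i) = (\<lambda>\<omega>. real (N i \<omega>))" "source (SF i j) = F i j"
  by (auto simp: source_def fun_eq_iff)

lemma indep_sources: "indep_vars (\<lambda>_. borel) source sources"
  using indep unfolding source_def[abs_def] sources_def .

lemma indep_source_blocks:
  assumes "J \<subseteq> sources" "K \<subseteq> sources" "J \<inter> K = {}"
  shows "indep_rv (PiM J (\<lambda>_. borel)) (\<lambda>\<omega>. restrict (\<lambda>s. source s \<omega>) J) (PiM K (\<lambda>_. borel)) (\<lambda>\<omega>. restrict (\<lambda>s. source s \<omega>) K)"
  using assms by (intro indep_var_imp_indep_rv indep_var_restrict[OF indep_sources])

lemma random_variable_source: "s \<in> sources \<Longrightarrow> random_variable borel (source s)"
  using indep_sources by (auto simp: indep_vars_def)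

lemma random_variable_Y [measurable]: "i \<le> D \<Longrightarrow> random_variable borel (Y i)"
  using random_variable_source[of "SY i"] by (simp add: sources_def)

lemma random_variable_F [measurable]: "i \<le> D \<Longrightarrow> 1 \<le> j \<Longrightarrow> random_variable borel (F i j)"
  using random_variable_source[of "SF i j"] by (simp add: sources_def)

lemma random_variable_N [measurable]: "i \<le> D \<Longrightarrow> N i \<in> measurable M (count_space UNIV)"
proof -
  assume "i \<le> D"
  then have "random_variable borel (\<lambda>\<omega>. real (N i \<omega>))"
    using random_variable_source[of "SM i"] by (simp add: sources_def)
  then have "(\<lambda>\<omega>. nat \<lfloor>real (N i \<omega>)\<rfloor>) \<in> measurable M (count_space UNIV)"
    by measurable
  then show ?thesis
    by simp
qed

lemma indep_source_family:
  assumes "\<And>i. i \<in> L \<Longrightarrow> K i \<subseteq> sources" "disjoint_family_on K L"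
    and "\<And>i. i \<in> L \<Longrightarrow> g i \<in> borel_measurable (PiM (K i) (\<lambda>_. borel))"
    and "\<And>i. i \<in> L \<Longrightarrow> Z i = (\<lambda>\<omega>. g i (restrict (\<lambda>s. source s \<omega>) (K i)))"
  shows "indep_vars (\<lambda>_. borel) Z L"
proof -
  have "indep_vars (\<lambda>_. borel) (\<lambda>i \<omega>. g i (restrict (\<lambda>s. source s \<omega>) (K i))) L"
    using indep_vars_compose2[OF indep_vars_restrict[OF indep_sources assms(1,2)] assms(3)] by simp
  then show ?thesis
    using assms(4) by (subst indep_vars_cong) auto
qed

lemma indep_Y: "indep_vars (\<lambda>_. borel) Y {..D}"
  by (rule indep_source_family[where K="\<lambda>i. {SY i}" and g="\<lambda>i z. z (SY i)"])
    (auto simp: sources_def disjoint_family_on_def)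

lemma indep_N: "indep_vars (\<lambda>_. borel) (\<lambda>k \<omega>. real (N k \<omega>)) {..D}"
  by (rule indep_source_family[where K="\<lambda>i. {SM i}" and g="\<lambda>i z. z (SM i)"])
    (auto simp: sources_def disjoint_family_on_def)

definition F_sum :: "(nat \<Rightarrow> nat) \<Rightarrow> nat \<Rightarrow> 'a \<Rightarrow> real" where
  "F_sum n i \<omega> = (\<Sum>j=1..n i. F i j \<omega>)"

lemma random_variable_F_sum [measurable]: "i \<le> D \<Longrightarrow> random_variable borel (F_sum n i)"
  unfolding F_sum_def by measurable

lemma indep_F_sum: "indep_vars (\<lambda>_. borel) (F_sum n) {..D}"
  by (rule indep_source_family[where K="\<lambda>i. SF i ` {1..n i}" and g="\<lambda>i z. \<Sum>j=1..n i. z (SF i j)"])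
    (auto simp: sources_def disjoint_family_on_def F_sum_def fun_eq_iff
      intro!: sum.cong borel_measurable_sum_components)

lemma distr_F_sum: "i \<le> D \<Longrightarrow> distr M borel (F_sum n i) = chi2_measure (real (n i))"
proof -
  assume i: "i \<le> D"
  have "indep_vars (\<lambda>_. borel) (F i) {1..n i}"
    by (rule indep_source_family[where K="\<lambda>j. {SF i j}" and g="\<lambda>j z. z (SF i j)"])
      (use i in \<open>auto simp: sources_def disjoint_family_on_def\<close>)
  then show ?thesis
    using distr_sum_chi2[of "{1..n i}" "F i" "\<lambda>_. 1"] i distr_F by (simp add: F_sum_def[abs_def])
qed

definition SF_block :: "(nat \<Rightarrow> nat) \<Rightarrow> src set" where
  "SF_block n = {SF i j | i j. i \<le> D \<and> 1 \<le> j \<and> j \<le> n i}"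

lemma SF_block_iff [simp]: "SF i j \<in> SF_block n \<longleftrightarrow> i \<le> D \<and> 1 \<le> j \<and> j \<le> n i"
  by (auto simp: SF_block_def)

definition W_given :: "(nat \<Rightarrow> nat) \<Rightarrow> 'a \<Rightarrow> real" where
  "W_given n \<omega> = (\<Sum>i\<le>D. Y i \<omega>) / ((\<Sum>i\<le>D. Y i \<omega>) + (\<Sum>i\<le>D. F_sum n i \<omega>))"

definition Xpnc_given :: "(nat \<Rightarrow> nat) \<Rightarrow> 'a \<Rightarrow> nat \<Rightarrow> real" where
  "Xpnc_given n \<omega> = dirichlet_proj D (\<lambda>i. F_sum n i \<omega>)"

lemma random_variable_W_given [measurable]: "random_variable borel (W_given n)"
  unfolding W_given_def by measurable

lemma random_variable_Xpnc_given [measurable]: "random_variable (PiM {..<D} (\<lambda>_. borel)) (Xpnc_given n)"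
  unfolding Xpnc_given_def by measurable

lemma indep_sum_Y_F_sums:
  "indep_rv borel (\<lambda>\<omega>. \<Sum>i\<le>D. Y i \<omega>)
     (PiM {..<D} (\<lambda>_. borel) \<Otimes>\<^sub>M borel) (\<lambda>\<omega>. (Xpnc_given n \<omega>, \<Sum>i\<le>D. F_sum n i \<omega>))"
proof -
  have [measurable]: "(\<lambda>z::src \<Rightarrow> real. \<Sum>j=1..n i. z (SF i j)) \<in> borel_measurable (PiM (SF_block n) (\<lambda>_. borel))"
    if "i \<in> {..D}" for i
    using that by (intro borel_measurable_sum_components) auto
  have "indep_rv (PiM (SY ` {..D}) (\<lambda>_. borel)) (\<lambda>\<omega>. restrict (\<lambda>s. source s \<omega>) (SY ` {..D}))
      (PiM (SF_block n) (\<lambda>_. borel)) (\<lambda>\<omega>. restrict (\<lambda>s. source s \<omega>) (SF_block n))"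
    by (rule indep_source_blocks) (auto simp: sources_def SF_block_def)
  then show ?thesis
    by (rule indep_rv_compose_eq[where f="\<lambda>z. \<Sum>i\<le>D. z (SY i)"
          and g="\<lambda>z. (dirichlet_proj D (\<lambda>i. \<Sum>j=1..n i. z (SF i j)), \<Sum>i\<le>D. \<Sum>j=1..n i. z (SF i j))"])
      (auto simp: Xpnc_given_def F_sum_def intro!: sum.cong dirichlet_proj_cong)
qed

lemma distr_W_given: "distr M borel (W_given n) = beta_measure (\<Sum>i\<le>D. \<alpha> i) (real (\<Sum>i\<le>D. n i))"
proof -
  have "indep_rv borel (\<lambda>\<omega>. \<Sum>i\<le>D. Y i \<omega>) borel (\<lambda>\<omega>. \<Sum>i\<le>D. F_sum n i \<omega>)"
    by (rule indep_rv_compose_eq[OF indep_sum_Y_F_sums measurable_id measurable_snd]) simp_all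
  moreover have "distr M borel (\<lambda>\<omega>. \<Sum>i\<le>D. Y i \<omega>) = chi2_measure (\<Sum>i\<le>D. \<alpha> i)"
    using \<alpha>_pos by (intro distr_sum_chi2[OF _ indep_Y distr_Y]) (auto intro: less_imp_le)
  moreover have "distr M borel (\<lambda>\<omega>. \<Sum>i\<le>D. F_sum n i \<omega>) = chi2_measure (real (\<Sum>i\<le>D. n i))"
    using distr_sum_chi2[OF _ indep_F_sum distr_F_sum] by simp
  moreover have "0 < (\<Sum>i\<le>D. \<alpha> i)"
    using \<alpha>_pos by (intro sum_pos) auto
  ultimately show ?thesis
    unfolding W_given_def[abs_def] by (intro distr_chi2_ratio) (auto intro: sum_nonneg)
qed

lemma distr_Xpnc_given: "distr M (PiM {..<D} (\<lambda>_. borel)) (Xpnc_given n) = dirichlet_measure D (\<lambda>i. real (n i))"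
  unfolding Xpnc_given_def[abs_def] by (rule distr_dirichlet_proj[OF indep_F_sum distr_F_sum])

lemma indep_W_given_Xpnc_given: "indep_rv borel (W_given n) (PiM {..<D} (\<lambda>_. borel)) (Xpnc_given n)"
proof -
  have "indep_rv (PiM {..<D} (\<lambda>_. borel)) (Xpnc_given n) borel (\<lambda>\<omega>. \<Sum>i\<le>D. F_sum n i \<omega>)"
    unfolding Xpnc_given_def[abs_def]
    by (rule indep_rv_sym[OF indep_rv_sum_dirichlet_proj[OF indep_F_sum distr_F_sum]]) simp_all
  from indep_rv_pair_assoc_right[OF this indep_rv_sym[OF indep_sum_Y_F_sums]]
  have "indep_rv (PiM {..<D} (\<lambda>_. borel)) (Xpnc_given n) borel (W_given n)"
    by (rule indep_rv_compose_eq[OF _ measurable_id, where g="\<lambda>(h, y). y / (y + h)"])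
      (simp_all add: W_given_def)
  then show ?thesis
    by (rule indep_rv_sym)
qed

lemma W_given_cong: "(\<And>k. k \<le> D \<Longrightarrow> n k = n' k) \<Longrightarrow> W_given n \<omega> = W_given n' \<omega>"
  unfolding W_given_def by (intro arg_cong2[where f="(/)"] arg_cong2[where f="(+)"] refl sum.cong) (simp_all add: F_sum_def)

lemma Xpnc_given_cong: "(\<And>k. k \<le> D \<Longrightarrow> n k = n' k) \<Longrightarrow> Xpnc_given n \<omega> = Xpnc_given n' \<omega>"
  unfolding Xpnc_given_def by (rule dirichlet_proj_cong) (simp add: F_sum_def)

definition central_part :: "'a \<Rightarrow> nat \<Rightarrow> real" where
  "central_part \<omega> = dirichlet_proj D (\<lambda>i. Y i \<omega>)"

definition mix_weight :: "'a \<Rightarrow> real" where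
  "mix_weight \<omega> = W_given (\<lambda>k. N k \<omega>) \<omega>"

definition pnc_part :: "'a \<Rightarrow> nat \<Rightarrow> real" where
  "pnc_part \<omega> = Xpnc_given (\<lambda>k. N k \<omega>) \<omega>"

lemma prob_mix_pnc_counts:
  assumes C[measurable]: "C \<in> sets (borel \<Otimes>\<^sub>M PiM {..<D} (\<lambda>_. borel))"
  shows "prob {\<omega>\<in>space M. (mix_weight \<omega>, pnc_part \<omega>) \<in> C \<and> (\<forall>k\<le>D. N k \<omega> = n k)}
    = prob {\<omega>\<in>space M. (W_given n \<omega>, Xpnc_given n \<omega>) \<in> C} * prob {\<omega>\<in>space M. \<forall>k\<le>D. N k \<omega> = n k}"
proof -
  let ?J = "SY ` {..D} \<union> SF_block n" and ?K = "SM ` {..D}"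
  have [measurable]: "(\<lambda>z::src \<Rightarrow> real. \<Sum>j=1..n i. z (SF i j)) \<in> borel_measurable (PiM ?J (\<lambda>_. borel))"
    if "i \<in> {..D}" for i
    using that by (intro borel_measurable_sum_components) auto
  have [measurable]: "(\<lambda>z::src \<Rightarrow> real. z s) \<in> borel_measurable (PiM J (\<lambda>_. borel))" if "s \<in> J" for s J
    using that measurable_component_singleton[of s J "\<lambda>_. borel"] by simp
  have "indep_rv (PiM ?J (\<lambda>_. borel)) (\<lambda>\<omega>. restrict (\<lambda>s. source s \<omega>) ?J)
      (PiM ?K (\<lambda>_. borel)) (\<lambda>\<omega>. restrict (\<lambda>s. source s \<omega>) ?K)"
    by (rule indep_source_blocks) (auto simp: sources_def SF_block_def)
  then have indep_counts: "indep_rv (borel \<Otimes>\<^sub>M PiM {..<D} (\<lambda>_. borel)) (\<lambda>\<omega>. (W_given n \<omega>, Xpnc_given n \<omega>))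
      (count_space UNIV) (\<lambda>\<omega>. \<forall>k\<le>D. N k \<omega> = n k)"
    by (rule indep_rv_compose_eq[where
          f="\<lambda>z. ((\<Sum>i\<le>D. z (SY i)) / ((\<Sum>i\<le>D. z (SY i)) + (\<Sum>i\<le>D. \<Sum>j=1..n i. z (SF i j))),
                  dirichlet_proj D (\<lambda>i. \<Sum>j=1..n i. z (SF i j)))"
          and g="\<lambda>z. \<forall>k\<le>D. z (SM k) = real (n k)"])
      (auto simp: W_given_def Xpnc_given_def F_sum_def intro!: sum.cong dirichlet_proj_cong)
  have "mix_weight \<omega> = W_given n \<omega>" "pnc_part \<omega> = Xpnc_given n \<omega>" if "\<forall>k\<le>D. N k \<omega> = n k" for \<omega>
    using that unfolding mix_weight_def pnc_part_def by (auto intro!: W_given_cong Xpnc_given_cong)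
  then have "{\<omega>\<in>space M. (mix_weight \<omega>, pnc_part \<omega>) \<in> C \<and> (\<forall>k\<le>D. N k \<omega> = n k)}
      = {\<omega>\<in>space M. (W_given n \<omega>, Xpnc_given n \<omega>) \<in> C \<and> (\<forall>k\<le>D. N k \<omega> = n k) \<in> {True}}"
    by auto
  then show ?thesis
    using indep_rvD[OF indep_counts C, of "{True}"] by simp
qed

lemma AE_Y_pos: "AE \<omega> in M. \<forall>i\<in>{..D}. 0 < Y i \<omega>"
  using \<alpha>_pos by (intro AE_finite_allI AE_chi2_rv_pos[OF random_variable_Y distr_Y]) auto

lemma AE_F_nonneg: "AE \<omega> in M. \<forall>i\<in>{..D}. \<forall>j\<ge>1. 0 \<le> F i j \<omega>"
  by (intro AE_finite_allI) (auto simp: AE_all_countable intro!: AE_chi2_rv_nonneg[OF random_variable_F distr_F]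
      intro: AE_mp[OF AE_I2])

lemma ncdir_decomposition:
  "AE \<omega> in M. \<forall>i<D. (Y i \<omega> + F_sum (\<lambda>k. N k \<omega>) i \<omega>) / (\<Sum>k\<le>D. Y k \<omega> + F_sum (\<lambda>k. N k \<omega>) k \<omega>)
     = mix_weight \<omega> * central_part \<omega> i + (1 - mix_weight \<omega>) * pnc_part \<omega> i"
  using AE_Y_pos AE_F_nonneg
proof eventually_elim
  case (elim \<omega>)
  define P where "P k = F_sum (\<lambda>k. N k \<omega>) k \<omega>" for k
  have P_nonneg: "0 \<le> P k" if "k \<le> D" for k
    using elim(2) that by (auto simp: P_def F_sum_def intro!: sum_nonneg)
  have Y_sum: "0 < (\<Sum>k\<le>D. Y k \<omega>)"
    using elim(1) by (intro sum_pos) auto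
  have P_zero: "P i = 0" if "(\<Sum>k\<le>D. P k) = 0" "i \<le> D" for i
    using that P_nonneg by (subst (asm) sum_nonneg_eq_0_iff) auto
  show ?case
  proof (intro allI impI)
    fix i assume i: "i < D"
    have "(Y i \<omega> + P i) / ((\<Sum>k\<le>D. Y k \<omega>) + (\<Sum>k\<le>D. P k))
        = (\<Sum>k\<le>D. Y k \<omega>) / ((\<Sum>k\<le>D. Y k \<omega>) + (\<Sum>k\<le>D. P k)) * (Y i \<omega> / (\<Sum>k\<le>D. Y k \<omega>))
          + (1 - (\<Sum>k\<le>D. Y k \<omega>) / ((\<Sum>k\<le>D. Y k \<omega>) + (\<Sum>k\<le>D. P k))) * (P i / (\<Sum>k\<le>D. P k))"
      using Y_sum P_nonneg P_zero i by (intro add_divide_convex_split) (auto intro: sum_nonneg)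
    then show "(Y i \<omega> + F_sum (\<lambda>k. N k \<omega>) i \<omega>) / (\<Sum>k\<le>D. Y k \<omega> + F_sum (\<lambda>k. N k \<omega>) k \<omega>)
        = mix_weight \<omega> * central_part \<omega> i + (1 - mix_weight \<omega>) * pnc_part \<omega> i"
      using i by (simp add: mix_weight_def central_part_def pnc_part_def W_given_def Xpnc_given_def
          dirichlet_proj_def sum.distrib P_def)
  qed
qed

definition noncentral_sources :: "src set" where
  "noncentral_sources = SM ` {..D} \<union> {SF i j | i j. i \<le> D \<and> 1 \<le> j}"

text \<open>The counts are stored as reals among the sources, so \<open>\<lfloor>_\<rfloor>\<close> recovers them: the random sums are
  measurable functions of the sources other than the \<open>Y\<^sub>i\<close>.\<close>

definition count_sum :: "(src \<Rightarrow> real) \<Rightarrow> nat \<Rightarrow> real" where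
  "count_sum g i = (\<Sum>j=1..nat \<lfloor>g (SM i)\<rfloor>. g (SF i j))"

lemma count_sum_borel [measurable]:
  assumes "i \<in> {..D}"
  shows "(\<lambda>g. count_sum g i) \<in> borel_measurable (PiM noncentral_sources (\<lambda>_. borel))"
proof -
  have [measurable]: "(\<lambda>g::src \<Rightarrow> real. g (SM i)) \<in> borel_measurable (PiM noncentral_sources (\<lambda>_. borel))"
    using assms measurable_component_singleton[of "SM i" noncentral_sources "\<lambda>_. borel"]
    by (simp add: noncentral_sources_def)
  have "(\<lambda>g::src \<Rightarrow> real. \<Sum>j=1..k. g (SF i j)) \<in> borel_measurable (PiM noncentral_sources (\<lambda>_. borel))" for k
    using assms by (intro borel_measurable_sum_components) (auto simp: noncentral_sources_def)
  then show ?thesis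
    unfolding count_sum_def by (rule measurable_compose_countable'[where I=UNIV]) measurable
qed

lemma indep_central_mix_pnc:
  "indep_rv (PiM {..<D} (\<lambda>_. borel)) central_part
     (borel \<Otimes>\<^sub>M PiM {..<D} (\<lambda>_. borel)) (\<lambda>\<omega>. (mix_weight \<omega>, pnc_part \<omega>))"
proof -
  let ?G = "\<lambda>\<omega>. restrict (\<lambda>s. source s \<omega>) noncentral_sources"
  have [measurable]: "(\<lambda>z::src \<Rightarrow> real. z (SY i)) \<in> borel_measurable (PiM (SY ` {..D}) (\<lambda>_. borel))"
    if "i \<in> {..D}" for i
    using that measurable_component_singleton[of "SY i" "SY ` {..D}" "\<lambda>_. borel"] by simp
  have counts: "count_sum (?G \<omega>) i = F_sum (\<lambda>k. N k \<omega>) i \<omega>" if "i \<le> D" for i \<omega>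
    using that by (auto simp: count_sum_def F_sum_def noncentral_sources_def intro!: sum.cong)
  have "indep_rv (PiM (SY ` {..D}) (\<lambda>_. borel)) (\<lambda>\<omega>. restrict (\<lambda>s. source s \<omega>) (SY ` {..D}))
      (PiM noncentral_sources (\<lambda>_. borel)) ?G"
    by (rule indep_source_blocks) (auto simp: sources_def noncentral_sources_def)
  then have "indep_rv (PiM {..<D} (\<lambda>_. borel) \<Otimes>\<^sub>M borel) (\<lambda>\<omega>. (central_part \<omega>, \<Sum>i\<le>D. Y i \<omega>))
      (PiM noncentral_sources (\<lambda>_. borel)) ?G"
    by (rule indep_rv_compose_eq[OF _ _ measurable_id, where f="\<lambda>z. (dirichlet_proj D (\<lambda>i. z (SY i)), \<Sum>i\<le>D. z (SY i))"])
      (auto simp: central_part_def intro: dirichlet_proj_cong)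
  moreover have "indep_rv (PiM {..<D} (\<lambda>_. borel)) central_part borel (\<lambda>\<omega>. \<Sum>i\<le>D. Y i \<omega>)"
    unfolding central_part_def[abs_def] using \<alpha>_pos
    by (intro indep_rv_sym[OF indep_rv_sum_dirichlet_proj[OF indep_Y distr_Y]]) (auto intro: less_imp_le)
  ultimately have "indep_rv (PiM {..<D} (\<lambda>_. borel)) central_part
      (borel \<Otimes>\<^sub>M PiM noncentral_sources (\<lambda>_. borel)) (\<lambda>\<omega>. (\<Sum>i\<le>D. Y i \<omega>, ?G \<omega>))"
    by (intro indep_rv_pair_assoc_right)
  moreover have "(\<lambda>p::real \<times> (src \<Rightarrow> real). (fst p / (fst p + (\<Sum>i\<le>D. count_sum (snd p) i)), dirichlet_proj D (count_sum (snd p))))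
      \<in> measurable (borel \<Otimes>\<^sub>M PiM noncentral_sources (\<lambda>_. borel)) (borel \<Otimes>\<^sub>M PiM {..<D} (\<lambda>_. borel))"
    by measurable
  ultimately show ?thesis
    by (rule indep_rv_compose_eq[OF _ measurable_id])
      (auto simp: mix_weight_def pnc_part_def W_given_def Xpnc_given_def counts intro: dirichlet_proj_cong)
qed

lemma random_variable_mix_weight [measurable]: "random_variable borel mix_weight"
  and random_variable_pnc_part [measurable]: "random_variable (PiM {..<D} (\<lambda>_. borel)) pnc_part"
  using measurable_compose[OF indep_rv_rv2[OF indep_central_mix_pnc] measurable_fst]
    measurable_compose[OF indep_rv_rv2[OF indep_central_mix_pnc] measurable_snd]
  by (simp_all add: comp_def)

lemma prob_counts: "prob {\<omega>\<in>space M. \<forall>k\<le>D. N k \<omega> = n k} = (\<Prod>k\<le>D. poisson_density (lam k / 2) (n k))"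
proof -
  have "prob (\<Inter>k\<in>{..D}. (\<lambda>\<omega>. real (N k \<omega>)) -` {real (n k)} \<inter> space M)
      = (\<Prod>k\<in>{..D}. prob ((\<lambda>\<omega>. real (N k \<omega>)) -` {real (n k)} \<inter> space M))"
    by (rule indep_varsD_finite[OF indep_N]) auto
  moreover have "(\<Inter>k\<in>{..D}. (\<lambda>\<omega>. real (N k \<omega>)) -` {real (n k)} \<inter> space M) = {\<omega>\<in>space M. \<forall>k\<le>D. N k \<omega> = n k}"
    "(\<lambda>\<omega>. real (N k \<omega>)) -` {real (n k)} \<inter> space M = {\<omega>\<in>space M. N k \<omega> = n k}" for k
    by auto
  ultimately show ?thesis
    by (simp add: prob_N)
qed

lemma pred_counts_eq [measurable]: "Measurable.pred M (\<lambda>\<omega>. \<forall>k\<le>D. N k \<omega> = n k)"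
proof -
  have "Measurable.pred M (\<lambda>\<omega>. \<forall>k\<in>{..D}. N k \<omega> = n k)"
    by measurable
  then show ?thesis
    by simp
qed

lemma prob_total_count_split:
  assumes [measurable]: "Measurable.pred M Q"
  shows "prob {\<omega>\<in>space M. Q \<omega> \<and> (\<Sum>k\<le>D. N k \<omega>) = m}
    = (\<Sum>j\<in>multi_indices_le D m. prob {\<omega>\<in>space M. Q \<omega> \<and> (\<forall>k\<le>D. N k \<omega> = complete_multi_index D m j k)})"
proof -
  let ?E = "\<lambda>j. {\<omega>\<in>space M. Q \<omega> \<and> (\<forall>k\<le>D. N k \<omega> = complete_multi_index D m j k)}"
  have "{\<omega>\<in>space M. Q \<omega> \<and> (\<Sum>k\<le>D. N k \<omega>) = m} = (\<Union>j\<in>multi_indices_le D m. ?E j)"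
  proof (intro equalityI subsetI)
    fix \<omega> assume \<omega>: "\<omega> \<in> {\<omega>\<in>space M. Q \<omega> \<and> (\<Sum>k\<le>D. N k \<omega>) = m}"
    define j where "j i = (if i < D then N i \<omega> else 0)" for i
    have "(\<Sum>i<D. j i) = (\<Sum>i<D. N i \<omega>)"
      by (rule sum.cong) (auto simp: j_def)
    moreover have "(\<Sum>k\<le>D. N k \<omega>) = (\<Sum>i<D. N i \<omega>) + N D \<omega>"
      by (simp add: lessThan_Suc_atMost[symmetric])
    ultimately have "j \<in> multi_indices_le D m" "\<forall>k\<le>D. N k \<omega> = complete_multi_index D m j k"
      using \<omega> by (auto simp: multi_indices_le_def complete_multi_index_def j_def)
    then show "\<omega> \<in> (\<Union>j\<in>multi_indices_le D m. ?E j)"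
      using \<omega> by blast
  next
    fix \<omega> assume "\<omega> \<in> (\<Union>j\<in>multi_indices_le D m. ?E j)"
    then obtain j where j: "j \<in> multi_indices_le D m" and \<omega>: "\<omega> \<in> ?E j"
      by blast
    then have "(\<Sum>k\<le>D. N k \<omega>) = (\<Sum>k\<le>D. complete_multi_index D m j k)"
      by (intro sum.cong) auto
    then show "\<omega> \<in> {\<omega>\<in>space M. Q \<omega> \<and> (\<Sum>k\<le>D. N k \<omega>) = m}"
      using \<omega> sum_complete_multi_index[OF j] by simp
  qed
  moreover have "disjoint_family_on ?E (multi_indices_le D m)"
    unfolding disjoint_family_on_def
  proof (intro ballI impI)
    fix j j' assume "j \<in> multi_indices_le D m" "j' \<in> multi_indices_le D m" "j \<noteq> j'"
    then obtain i where "i < D" "j i \<noteq> j' i"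
      by (auto simp: multi_indices_le_def fun_eq_iff) (metis not_le)
    then show "?E j \<inter> ?E j' = {}"
      by (auto simp: complete_multi_index_def)
  qed
  moreover have "?E ` multi_indices_le D m \<subseteq> events"
    by auto
  ultimately show ?thesis
    using finite_measure_finite_Union[OF finite_multi_indices_le] by simp
qed

lemma prob_W_given:
  "A \<in> sets borel \<Longrightarrow> prob {\<omega>\<in>space M. W_given n \<omega> \<in> A} = measure (beta_measure (\<Sum>i\<le>D. \<alpha> i) (real (\<Sum>i\<le>D. n i))) A"
  by (subst distr_W_given[symmetric], subst measure_distr) (auto intro!: arg_cong[where f=prob])

lemma prob_Xpnc_given:
  "B \<in> sets (PiM {..<D} (\<lambda>_. borel)) \<Longrightarrow>
    prob {\<omega>\<in>space M. Xpnc_given n \<omega> \<in> B} = measure (dirichlet_measure D (\<lambda>i. real (n i))) B"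
  by (subst distr_Xpnc_given[symmetric], subst measure_distr) (auto intro!: arg_cong[where f=prob])

lemma prob_mix_counts:
  assumes "A \<in> sets borel"
  shows "prob {\<omega>\<in>space M. mix_weight \<omega> \<in> A \<and> (\<forall>k\<le>D. N k \<omega> = n k)}
    = measure (beta_measure (\<Sum>i\<le>D. \<alpha> i) (real (\<Sum>i\<le>D. n i))) A * prob {\<omega>\<in>space M. \<forall>k\<le>D. N k \<omega> = n k}"
  using prob_mix_pnc_counts[of "A \<times> space (PiM {..<D} (\<lambda>_. borel))" n] assms
  by (simp add: prob_W_given pnc_part_def Xpnc_given_def dirichlet_proj_in_space)

lemma prob_pnc_counts:
  assumes "B \<in> sets (PiM {..<D} (\<lambda>_. borel))"
  shows "prob {\<omega>\<in>space M. pnc_part \<omega> \<in> B \<and> (\<forall>k\<le>D. N k \<omega> = n k)}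
    = measure (dirichlet_measure D (\<lambda>k. real (n k))) B * prob {\<omega>\<in>space M. \<forall>k\<le>D. N k \<omega> = n k}"
  using prob_mix_pnc_counts[of "UNIV \<times> B" n] assms by (simp add: prob_Xpnc_given)

lemma prob_mix_pnc_rect_counts:
  assumes "A \<in> sets borel" "B \<in> sets (PiM {..<D} (\<lambda>_. borel))"
  shows "prob {\<omega>\<in>space M. mix_weight \<omega> \<in> A \<and> pnc_part \<omega> \<in> B \<and> (\<forall>k\<le>D. N k \<omega> = n k)}
    = measure (beta_measure (\<Sum>i\<le>D. \<alpha> i) (real (\<Sum>i\<le>D. n i))) A * measure (dirichlet_measure D (\<lambda>i. real (n i))) B
      * prob {\<omega>\<in>space M. \<forall>k\<le>D. N k \<omega> = n k}"
  using prob_mix_pnc_counts[of "A \<times> B" n] assms indep_rvD[OF indep_W_given_Xpnc_given assms]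
  by (simp add: prob_W_given prob_Xpnc_given conj_assoc)

lemma prob_total_count:
  "prob {\<omega>\<in>space M. (\<Sum>k\<le>D. N k \<omega>) = m} = poisson_density ((\<Sum>k\<le>D. lam k) / 2) m"
proof -
  let ?r = "\<lambda>k. lam k / 2"
  have R: "(\<Sum>k\<le>D. ?r k) = (\<Sum>k\<le>D. lam k) / 2" "(\<Sum>k\<le>D. ?r k) \<noteq> 0"
    using lam_sum_pos by (simp_all add: sum_divide_distrib[symmetric])
  have "prob {\<omega>\<in>space M. True \<and> (\<Sum>k\<le>D. N k \<omega>) = m}
      = (\<Sum>j\<in>multi_indices_le D m. prob {\<omega>\<in>space M. True \<and> (\<forall>k\<le>D. N k \<omega> = complete_multi_index D m j k)})"
    by (rule prob_total_count_split) simp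
  also have "\<dots> = (\<Sum>j\<in>multi_indices_le D m. poisson_density (\<Sum>k\<le>D. ?r k) m
      * multinomial_term D m (\<lambda>i. ?r i / (\<Sum>k\<le>D. ?r k)) (?r D / (\<Sum>k\<le>D. ?r k)) j)"
    using R by (intro sum.cong) (simp_all add: prob_counts prod_poisson_density_complete_multi_index)
  also have "\<dots> = poisson_density (\<Sum>k\<le>D. ?r k) m"
    by (subst sum_distrib_left[symmetric]) (simp only: sum_multinomial_term_eq_1[OF R(2)] mult_1_right)
  finally show ?thesis
    by (simp only: R(1) simp_thms)
qed

lemma prob_total_count_split_True:
  "prob {\<omega>\<in>space M. (\<Sum>k\<le>D. N k \<omega>) = m}
    = (\<Sum>j\<in>multi_indices_le D m. prob {\<omega>\<in>space M. \<forall>k\<le>D. N k \<omega> = complete_multi_index D m j k})"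
  using prob_total_count_split[of "\<lambda>_. True" m] by simp

lemma prob_mix_total:
  assumes A[measurable]: "A \<in> sets borel"
  shows "prob {\<omega>\<in>space M. mix_weight \<omega> \<in> A \<and> (\<Sum>k\<le>D. N k \<omega>) = m}
    = measure (beta_measure (\<Sum>i\<le>D. \<alpha> i) (real m)) A * prob {\<omega>\<in>space M. (\<Sum>k\<le>D. N k \<omega>) = m}"
proof -
  have "prob {\<omega>\<in>space M. mix_weight \<omega> \<in> A \<and> (\<Sum>k\<le>D. N k \<omega>) = m}
      = (\<Sum>j\<in>multi_indices_le D m. prob {\<omega>\<in>space M. mix_weight \<omega> \<in> A \<and> (\<forall>k\<le>D. N k \<omega> = complete_multi_index D m j k)})"
    by (rule prob_total_count_split) measurable
  also have "\<dots> = (\<Sum>j\<in>multi_indices_le D m. measure (beta_measure (\<Sum>i\<le>D. \<alpha> i) (real m)) A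
      * prob {\<omega>\<in>space M. \<forall>k\<le>D. N k \<omega> = complete_multi_index D m j k})"
    by (intro sum.cong) (simp_all add: prob_mix_counts sum_complete_multi_index)
  finally show ?thesis
    by (simp add: prob_total_count_split_True sum_distrib_left)
qed

lemma prob_pnc_total:
  assumes B[measurable]: "B \<in> sets (PiM {..<D} (\<lambda>_. borel))"
  shows "prob {\<omega>\<in>space M. pnc_part \<omega> \<in> B \<and> (\<Sum>k\<le>D. N k \<omega>) = m}
    = prob {\<omega>\<in>space M. (\<Sum>k\<le>D. N k \<omega>) = m}
      * (\<Sum>j\<in>multi_indices_le D m. multinomial_term D m (\<lambda>i. lam i / (\<Sum>k\<le>D. lam k)) (lam D / (\<Sum>k\<le>D. lam k)) j
          * measure (dirichlet_measure D (\<lambda>i. real (complete_multi_index D m j i))) B)"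
proof -
  let ?r = "\<lambda>k. lam k / 2"
  have R: "(\<Sum>k\<le>D. ?r k) = (\<Sum>k\<le>D. lam k) / 2" "(\<Sum>k\<le>D. ?r k) \<noteq> 0"
    using lam_sum_pos by (simp_all add: sum_divide_distrib[symmetric])
  have counts: "prob {\<omega>\<in>space M. \<forall>k\<le>D. N k \<omega> = complete_multi_index D m j k}
      = prob {\<omega>\<in>space M. (\<Sum>k\<le>D. N k \<omega>) = m}
        * multinomial_term D m (\<lambda>i. lam i / (\<Sum>k\<le>D. lam k)) (lam D / (\<Sum>k\<le>D. lam k)) j"
    if "j \<in> multi_indices_le D m" for j
    using prod_poisson_density_complete_multi_index[OF R(2) that] R
    by (simp add: prob_counts prob_total_count)
  have "prob {\<omega>\<in>space M. pnc_part \<omega> \<in> B \<and> (\<Sum>k\<le>D. N k \<omega>) = m}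
      = (\<Sum>j\<in>multi_indices_le D m. prob {\<omega>\<in>space M. pnc_part \<omega> \<in> B \<and> (\<forall>k\<le>D. N k \<omega> = complete_multi_index D m j k)})"
    by (rule prob_total_count_split) measurable
  also have "\<dots> = (\<Sum>j\<in>multi_indices_le D m. measure (dirichlet_measure D (\<lambda>i. real (complete_multi_index D m j i))) B
      * prob {\<omega>\<in>space M. \<forall>k\<le>D. N k \<omega> = complete_multi_index D m j k})"
    by (intro sum.cong) (simp_all add: prob_pnc_counts)
  finally show ?thesis
    by (simp add: counts sum_distrib_left mult_ac cong: sum.cong)
qed

lemma cond_indep_mix_pnc_total:
  assumes A[measurable]: "A \<in> sets borel" and B[measurable]: "B \<in> sets (PiM {..<D} (\<lambda>_. borel))"
  shows "prob {\<omega>\<in>space M. mix_weight \<omega> \<in> A \<and> pnc_part \<omega> \<in> B \<and> (\<Sum>k\<le>D. N k \<omega>) = m}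
      * prob {\<omega>\<in>space M. (\<Sum>k\<le>D. N k \<omega>) = m}
    = prob {\<omega>\<in>space M. mix_weight \<omega> \<in> A \<and> (\<Sum>k\<le>D. N k \<omega>) = m}
      * prob {\<omega>\<in>space M. pnc_part \<omega> \<in> B \<and> (\<Sum>k\<le>D. N k \<omega>) = m}"
proof -
  let ?beta = "measure (beta_measure (\<Sum>i\<le>D. \<alpha> i) (real m)) A"
  have "prob {\<omega>\<in>space M. mix_weight \<omega> \<in> A \<and> pnc_part \<omega> \<in> B \<and> (\<Sum>k\<le>D. N k \<omega>) = m}
      = (\<Sum>j\<in>multi_indices_le D m.
          prob {\<omega>\<in>space M. (mix_weight \<omega> \<in> A \<and> pnc_part \<omega> \<in> B) \<and> (\<forall>k\<le>D. N k \<omega> = complete_multi_index D m j k)})"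
    using prob_total_count_split[of "\<lambda>\<omega>. mix_weight \<omega> \<in> A \<and> pnc_part \<omega> \<in> B" m] by (simp add: conj_assoc)
  also have "\<dots> = ?beta * (\<Sum>j\<in>multi_indices_le D m.
      prob {\<omega>\<in>space M. pnc_part \<omega> \<in> B \<and> (\<forall>k\<le>D. N k \<omega> = complete_multi_index D m j k)})"
    by (simp add: sum_distrib_left prob_mix_pnc_rect_counts prob_pnc_counts sum_complete_multi_index
        mult.assoc conj_assoc cong: sum.cong)
  also have "\<dots> = ?beta * prob {\<omega>\<in>space M. pnc_part \<omega> \<in> B \<and> (\<Sum>k\<le>D. N k \<omega>) = m}"
    by (simp add: prob_total_count_split)
  finally show ?thesis
    by (simp add: prob_mix_total)
qed

lemma distr_central_part: "distr M (PiM {..<D} (\<lambda>_. borel)) central_part = dirichlet_measure D \<alpha>"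
  unfolding central_part_def[abs_def] by (rule distr_dirichlet_proj[OF indep_Y distr_Y])

text \<open>The case distinction in the paper's definition of \<open>X'\<^sub>p\<^sub>n\<^sub>c\<close> is built into the division:
  without any Poisson event all random sums vanish and \<open>0 / 0 = 0\<close>.\<close>

lemma pnc_part_eq:
  "pnc_part \<omega> = (\<lambda>i\<in>{..<D}. if (\<Sum>k\<le>D. N k \<omega>) = 0 then 0
     else (\<Sum>j=1..N i \<omega>. F i j \<omega>) / (\<Sum>k\<le>D. \<Sum>j=1..N k \<omega>. F k j \<omega>))"
  by (auto simp: pnc_part_def Xpnc_given_def dirichlet_proj_def F_sum_def intro!: restrict_ext)

end

theorem proposition3:
  fixes P :: "'a measure"
    and D :: nat
    and \<alpha> lam :: "nat \<Rightarrow> real"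
    and Y :: "nat \<Rightarrow> 'a \<Rightarrow> real"
    and N :: "nat \<Rightarrow> 'a \<Rightarrow> nat"
    and F :: "nat \<Rightarrow> nat \<Rightarrow> 'a \<Rightarrow> real"
    and W :: "'a \<Rightarrow> real"
    and X X' Xpnc :: "'a \<Rightarrow> nat \<Rightarrow> real"
  assumes "prob_space P"
    and "D \<ge> 2"
    and \<alpha>_pos: "\<And>i. i \<le> D \<Longrightarrow> \<alpha> i > 0"
    and lam_nonneg: "\<And>i. i \<le> D \<Longrightarrow> lam i \<ge> 0"
    and lam_sum_pos: "(\<Sum>i\<le>D. lam i) > 0"
    and indep: "prob_space.indep_vars P (\<lambda>_. borel)
        (\<lambda>s \<omega>. case s of SY i \<Rightarrow> Y i \<omega> | SM i \<Rightarrow> real (N i \<omega>) | SF i j \<Rightarrow> F i j \<omega>)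
        (SY ` {..D} \<union> SM ` {..D} \<union> {SF i j | i j. i \<le> D \<and> j \<ge> 1})"
    and Y_distr: "\<And>i. i \<le> D \<Longrightarrow> distr P borel (Y i) = chi2_measure (\<alpha> i)"
    and N_distr: "\<And>i k. i \<le> D \<Longrightarrow>
        measure P {\<omega> \<in> space P. N i \<omega> = k} = (lam i / 2) ^ k / fact k * exp (- lam i / 2)"
    and F_distr: "\<And>i j. i \<le> D \<Longrightarrow> j \<ge> 1 \<Longrightarrow> distr P borel (F i j) = chi2_measure 1"
    and W_def: "W \<equiv> (\<lambda>\<omega>. (\<Sum>i\<le>D. Y i \<omega>) /
        ((\<Sum>i\<le>D. Y i \<omega>) + (\<Sum>i\<le>D. \<Sum>j=1..N i \<omega>. F i j \<omega>)))"
    and X_def: "X \<equiv> (\<lambda>\<omega>. \<lambda>i\<in>{..<D}. Y i \<omega> / (\<Sum>k\<le>D. Y k \<omega>))"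
    and X'_def: "X' \<equiv> (\<lambda>\<omega>. \<lambda>i\<in>{..<D}. (Y i \<omega> + (\<Sum>j=1..N i \<omega>. F i j \<omega>)) /
        (\<Sum>k\<le>D. Y k \<omega> + (\<Sum>j=1..N k \<omega>. F k j \<omega>)))"
    and Xpnc_def: "Xpnc \<equiv> (\<lambda>\<omega>. \<lambda>i\<in>{..<D}. if (\<Sum>k\<le>D. N k \<omega>) = 0 then 0
        else (\<Sum>j=1..N i \<omega>. F i j \<omega>) / (\<Sum>k\<le>D. \<Sum>j=1..N k \<omega>. F k j \<omega>))"
  shows
    "(AE \<omega> in P. \<forall>i<D. X' \<omega> i = W \<omega> * X \<omega> i + (1 - W \<omega>) * Xpnc \<omega> i)
     \<and> (\<forall>A\<in>sets (PiM {..<D} (\<lambda>_. borel)). \<forall>C\<in>sets (borel \<Otimes>\<^sub>M PiM {..<D} (\<lambda>_. borel)).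
          measure P {\<omega>\<in>space P. X \<omega> \<in> A \<and> (W \<omega>, Xpnc \<omega>) \<in> C}
          = measure P {\<omega>\<in>space P. X \<omega> \<in> A} * measure P {\<omega>\<in>space P. (W \<omega>, Xpnc \<omega>) \<in> C})
     \<and> distr P (PiM {..<D} (\<lambda>_. borel)) X = dirichlet_measure D \<alpha>
     \<and> (\<forall>m::nat. \<forall>A\<in>sets borel. \<forall>B\<in>sets (PiM {..<D} (\<lambda>_. borel)).
          measure P {\<omega>\<in>space P. W \<omega> \<in> A \<and> Xpnc \<omega> \<in> B \<and> (\<Sum>k\<le>D. N k \<omega>) = m}
            * measure P {\<omega>\<in>space P. (\<Sum>k\<le>D. N k \<omega>) = m}
          = measure P {\<omega>\<in>space P. W \<omega> \<in> A \<and> (\<Sum>k\<le>D. N k \<omega>) = m}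
            * measure P {\<omega>\<in>space P. Xpnc \<omega> \<in> B \<and> (\<Sum>k\<le>D. N k \<omega>) = m})
     \<and> (\<forall>m::nat. \<forall>A\<in>sets borel.
          measure P {\<omega>\<in>space P. W \<omega> \<in> A \<and> (\<Sum>k\<le>D. N k \<omega>) = m}
          = measure (beta_measure (\<Sum>i\<le>D. \<alpha> i) (real m)) A
            * measure P {\<omega>\<in>space P. (\<Sum>k\<le>D. N k \<omega>) = m})
     \<and> (\<forall>n::nat \<Rightarrow> nat. \<forall>B\<in>sets (PiM {..<D} (\<lambda>_. borel)).
          measure P {\<omega>\<in>space P. Xpnc \<omega> \<in> B \<and> (\<forall>k\<le>D. N k \<omega> = n k)}
          = measure (dirichlet_measure D (\<lambda>k. real (n k))) B
            * measure P {\<omega>\<in>space P. \<forall>k\<le>D. N k \<omega> = n k})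
     \<and> (\<forall>m::nat. \<forall>B\<in>sets (PiM {..<D} (\<lambda>_. borel)).
          measure P {\<omega>\<in>space P. Xpnc \<omega> \<in> B \<and> (\<Sum>k\<le>D. N k \<omega>) = m}
          = measure P {\<omega>\<in>space P. (\<Sum>k\<le>D. N k \<omega>) = m} *
            (\<Sum>j\<in>{j::nat \<Rightarrow> nat. (\<forall>i\<ge>D. j i = 0) \<and> (\<Sum>i<D. j i) \<le> m}.
               fact m / ((\<Prod>i<D. fact (j i)) * fact (m - (\<Sum>i<D. j i)))
               * (\<Prod>i<D. (lam i / (\<Sum>k\<le>D. lam k)) ^ j i)
               * (lam D / (\<Sum>k\<le>D. lam k)) ^ (m - (\<Sum>i<D. j i))
               * measure (dirichlet_measure D
                   (\<lambda>i. if i < D then real (j i) else real (m - (\<Sum>i<D. j i)))) B))"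
proof -
  interpret model: noncentral_dirichlet_model P D \<alpha> lam Y N F
    by (intro noncentral_dirichlet_model.intro noncentral_dirichlet_model_axioms.intro assms(1) \<alpha>_pos
        lam_sum_pos indep Y_distr F_distr) (simp_all add: N_distr poisson_density_def)
  have W: "W = model.mix_weight" and X: "X = model.central_part" and Xpnc: "Xpnc = model.pnc_part"
    unfolding W_def X_def Xpnc_def model.pnc_part_eq[abs_def]
    by (simp_all add: fun_eq_iff model.mix_weight_def model.W_given_def model.F_sum_def
        model.central_part_def dirichlet_proj_def)
  have X': "X' \<omega> i = (Y i \<omega> + model.F_sum (\<lambda>k. N k \<omega>) i \<omega>) / (\<Sum>k\<le>D. Y k \<omega> + model.F_sum (\<lambda>k. N k \<omega>) k \<omega>)"
    if "i < D" for \<omega> i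
    using that by (simp add: X'_def model.F_sum_def)
  have dirichlet_param: "(\<lambda>i. real (complete_multi_index D m j i))
      = (\<lambda>i. if i < D then real (j i) else real (m - (\<Sum>i<D. j i)))" for m j
    by (simp add: fun_eq_iff complete_multi_index_def)
  show ?thesis
    unfolding W X Xpnc
    using model.ncdir_decomposition model.indep_rvD[OF model.indep_central_mix_pnc]
      model.distr_central_part model.cond_indep_mix_pnc_total model.prob_mix_total
      model.prob_pnc_counts model.prob_pnc_total
    by (simp add: X' dirichlet_param multi_indices_le_def multinomial_term_def cong: AE_cong)
qed

end
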